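(* Under the standing assumptions, the set $\mathcal{D}(V)$ is open in $H$ with respect to the topology induced by the norm $\|\cdot\|_{-1}$.
   Context: Fix $T>0$, $r>0$, $\rho>0$. $L^2_{-T}:=L^2([-T,0];\mathbb{R})$, $W^{1,2}_{-T}:=W^{1,2}([-T,0];\mathbb{R})$, $H:=\mathbb{R}\times L^2_{-T}$ with elements $\eta=(\eta_0,\eta_1)$ and norm $\|\cdot\|$, $H_+:=(0,+\infty)\times L^2_{-T}$. Standing assumptions: $a\in W^{1,2}_{-T}$, $a\ge0$, $a(-T)=0$; $f_0:[0,\infty)\times\mathbb{R}\to\mathbb{R}$ jointly concave, nondecreasing in its second variable, Lipschitz with constant $C_{f_0}$, $f_0(0,y)>0$ for all $y>0$, extended to $\mathbb{R}^2$ by $f_0(x,y):=f_0(0,y)$ for $x<0$; $U_1\in C([0,\infty))\cap C^2((0,\infty))$ with $U_1'>0$, $U_1'(0^+)=+\infty$, $U_1''<0$, $U_1$ bounded; $U_2\in C((0,\infty))$ increasing, concave, bounded above, with $\int_0^\infty e^{-\rho t}U_2(e^{-C_{f_0}t})dt>-\infty$. For $\eta\in H_+$ and $c\in L^1_{loc}([0,\infty);[0,\infty))$, $x(\cdot;\eta,c)$ is the unique function $x:[-T,\infty)\to\mathbb{R}$, continuous on $[0,\infty)$, with $x=\eta_1$ a.e. on $[-T,0)$ and $x(t)=\eta_0+\int_0^t[r x(s)+f_0(x(s),\int_{-T}^0a(\xi)x(s+\xi)d\xi)-c(s)]ds$ for $t\ge 0$. Admissible controls: $\mathcal{C}(\eta):=\{c\in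 L^1_{loc}([0,\infty);[0,\infty)) : x(t;\eta,c)>0\ \forall t\ge0\}$. $J(\eta;c):=\int_0^\infty e^{-\rho t}[U_1(c(t))+U_2(x(t;\eta,c))]dt$, $V(\eta):=\sup_{c\in\mathcal{C}(\eta)}J(\eta;c)$ ($\sup\emptyset=-\infty$), $\mathcal{D}(V):=\{\eta\in H_+: V(\eta)>-\infty\}$. Operator $A(\eta_0,\eta_1):=(r\eta_0,\eta_1')$ on $\mathcal{D}(A):=\{\eta\in H:\eta_1\in W^{1,2}_{-T},\eta_1(0)=\eta_0\}$, with bounded inverse $A^{-1}(\eta_0,\eta_1)=\big(\frac{\eta_0}{r},\ s\mapsto\frac{\eta_0}{r}-\int_s^0\eta_1\big)$; $\|\eta\|_{-1}:=\|A^{-1}\eta\|$. *)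

theory Defs
  imports "HOL-Analysis.Analysis"
begin

text \<open>Elements of H = R x L^2([-T,0]) are represented by pairs (eta0, eta1) with
  eta1 a (representative) square integrable function on [-T,0].\<close>

definition inL2 :: "real \<Rightarrow> (real \<Rightarrow> real) \<Rightarrow> bool" where
  "inL2 T g \<longleftrightarrow> set_borel_measurable lborel {-T..0} g \<and>
                 set_integrable lborel {-T..0} (\<lambda>s. (g s)^2)"

definition inH :: "real \<Rightarrow> real \<times> (real \<Rightarrow> real) \<Rightarrow> bool" where
  "inH T \<eta> \<longleftrightarrow> inL2 T (snd \<eta>)"

definition inHplus :: "real \<Rightarrow> real \<times> (real \<Rightarrow> real) \<Rightarrow> bool" where
  "inHplus T \<eta> \<longleftrightarrow> fst \<eta> > 0 \<and> inL2 T (snd \<eta>)"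

definition inW12 :: "real \<Rightarrow> (real \<Rightarrow> real) \<Rightarrow> bool" where
  "inW12 T g \<longleftrightarrow> (\<exists>g'. inL2 T g' \<and>
      (\<forall>s\<in>{-T..0}. g s = g (-T) + (\<integral>u\<in>{-T..s}. g' u \<partial>lborel)))"

text \<open>Norm ||eta||_{-1} = ||A^{-1} eta||.\<close>
definition norm_m1 :: "real \<Rightarrow> real \<Rightarrow> real \<times> (real \<Rightarrow> real) \<Rightarrow> real" where
  "norm_m1 T r \<eta> = sqrt ((fst \<eta> / r)^2 +
     (\<integral>s\<in>{-T..0}. (fst \<eta> / r - (\<integral>u\<in>{s..0}. snd \<eta> u \<partial>lborel))^2 \<partial>lborel))"

definition Hminus :: "real \<times> (real \<Rightarrow> real) \<Rightarrow> real \<times> (real \<Rightarrow> real) \<Rightarrow> real \<times> (real \<Rightarrow> real)" where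
  "Hminus \<eta> \<zeta> = (fst \<eta> - fst \<zeta>, \<lambda>s. snd \<eta> s - snd \<zeta> s)"

definition Lloc_nonneg :: "(real \<Rightarrow> real) \<Rightarrow> bool" where
  "Lloc_nonneg c \<longleftrightarrow> (\<forall>t\<ge>0. c t \<ge> 0) \<and> (\<forall>t\<ge>0. set_integrable lborel {0..t} c)"

definition is_state ::
  "real \<Rightarrow> real \<Rightarrow> (real \<Rightarrow> real) \<Rightarrow> (real \<Rightarrow> real \<Rightarrow> real) \<Rightarrow>
   real \<times> (real \<Rightarrow> real) \<Rightarrow> (real \<Rightarrow> real) \<Rightarrow> (real \<Rightarrow> real) \<Rightarrow> bool" where
  "is_state T r a f0 \<eta> c x \<longleftrightarrow>
     (\<forall>t<0. x t = snd \<eta> t) \<and> continuous_on {0..} x \<and>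
     (\<forall>s\<ge>0. set_integrable lborel {-T..0} (\<lambda>\<xi>. a \<xi> * x (s + \<xi>))) \<and>
     (\<forall>t\<ge>0. set_integrable lborel {0..t}
                (\<lambda>s. r * x s + f0 (x s) (\<integral>\<xi>\<in>{-T..0}. a \<xi> * x (s + \<xi>) \<partial>lborel) - c s) \<and>
             x t = fst \<eta> + (\<integral>s\<in>{0..t}.
                (r * x s + f0 (x s) (\<integral>\<xi>\<in>{-T..0}. a \<xi> * x (s + \<xi>) \<partial>lborel) - c s) \<partial>lborel))"

definition state ::
  "real \<Rightarrow> real \<Rightarrow> (real \<Rightarrow> real) \<Rightarrow> (real \<Rightarrow> real \<Rightarrow> real) \<Rightarrow>
   real \<times> (real \<Rightarrow> real) \<Rightarrow> (real \<Rightarrow> real) \<Rightarrow> real \<Rightarrow> real" where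
  "state T r a f0 \<eta> c = (THE x. is_state T r a f0 \<eta> c x)"

definition admissible ::
  "real \<Rightarrow> real \<Rightarrow> (real \<Rightarrow> real) \<Rightarrow> (real \<Rightarrow> real \<Rightarrow> real) \<Rightarrow>
   real \<times> (real \<Rightarrow> real) \<Rightarrow> (real \<Rightarrow> real) set" where
  "admissible T r a f0 \<eta> = {c. Lloc_nonneg c \<and> (\<forall>t\<ge>0. state T r a f0 \<eta> c t > 0)}"

definition Jfun ::
  "real \<Rightarrow> real \<Rightarrow> real \<Rightarrow> (real \<Rightarrow> real) \<Rightarrow> (real \<Rightarrow> real \<Rightarrow> real) \<Rightarrow>
   (real \<Rightarrow> real) \<Rightarrow> (real \<Rightarrow> real) \<Rightarrow> real \<times> (real \<Rightarrow> real) \<Rightarrow> (real \<Rightarrow> real) \<Rightarrow> ereal" where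
  "Jfun T r \<rho> a f0 U1 U2 \<eta> c =
     (let g = (\<lambda>t. exp (-\<rho> * t) * (U1 (c t) + U2 (state T r a f0 \<eta> c t))) in
      enn2ereal (\<integral>\<^sup>+ t\<in>{0..}. ennreal (g t) \<partial>lborel) -
      enn2ereal (\<integral>\<^sup>+ t\<in>{0..}. ennreal (- g t) \<partial>lborel))"

definition Vfun ::
  "real \<Rightarrow> real \<Rightarrow> real \<Rightarrow> (real \<Rightarrow> real) \<Rightarrow> (real \<Rightarrow> real \<Rightarrow> real) \<Rightarrow>
   (real \<Rightarrow> real) \<Rightarrow> (real \<Rightarrow> real) \<Rightarrow> real \<times> (real \<Rightarrow> real) \<Rightarrow> ereal" where
  "Vfun T r \<rho> a f0 U1 U2 \<eta> = (SUP c\<in>admissible T r a f0 \<eta>. Jfun T r \<rho> a f0 U1 U2 \<eta> c)"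

definition domV ::
  "real \<Rightarrow> real \<Rightarrow> real \<Rightarrow> (real \<Rightarrow> real) \<Rightarrow> (real \<Rightarrow> real \<Rightarrow> real) \<Rightarrow>
   (real \<Rightarrow> real) \<Rightarrow> (real \<Rightarrow> real) \<Rightarrow> (real \<times> (real \<Rightarrow> real)) set" where
  "domV T r \<rho> a f0 U1 U2 = {\<eta>. inHplus T \<eta> \<and> Vfun T r \<rho> a f0 U1 U2 \<eta> > -\<infinity>}"

end

theory Submission
  imports Defs "HOL-Probability.Probability"
begin

(* Let eta be in D(V): some admissible control c_eta has a state x_eta
   that is positive, hence bounded below by some m > 0 on the compact interval [0,T].  For an initial
   datum zeta close to eta in ||.||_{-1} we steer the state of zeta explicitly: on [0,T] it equals
   x_eta minus an exponentially growing correction phi that absorbs the difference of the initial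
   values and the difference of the delay terms, and after T it decays like x(T) e^{-C(t-T)}.  The
   control realising this path is nonnegative (by monotonicity and the Lipschitz bound of f0), the path
   stays above m/2, and the integrability hypothesis on U2 makes the payoff finite, so V(zeta) > -oo.
   The delay terms of the two histories differ by int a(xi) (eta1 - zeta1)(s+xi) dxi; integrating by
   parts (Fubini, using a' in L^2 and a(-T) = 0) bounds this by a constant times ||zeta - eta||_{-1}. *)

lemma abs_le_one_plus_square: "\<bar>x::real\<bar> \<le> 1 + x^2"
proof -
  have "0 \<le> (\<bar>x\<bar> - 1)^2" by simp
  then show ?thesis by (simp add: power2_eq_square algebra_simps abs_mult_self_eq)
qed

lemma inL2_set_integrable:
  assumes "inL2 T g"
  shows "set_integrable lborel {-T..0} g"
proof -
  have c: "set_integrable lborel {-T..0} (\<lambda>s. 1::real)"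
    unfolding set_integrable_def by (rule borel_integrable_compact) auto
  have i: "set_integrable lborel {-T..0} (\<lambda>s. 1 + (g s)^2)"
    using c assms unfolding inL2_def by (intro set_integral_add) auto
  show ?thesis
  proof (rule set_integrable_bound[OF i])
    show "set_borel_measurable lborel {-T..0} g" using assms unfolding inL2_def by blast
    show "AE x in lborel. x \<in> {-T..0} \<longrightarrow> norm (g x) \<le> norm (1 + (g x)^2)"
      using abs_le_one_plus_square by (intro AE_I2) (simp add: add_nonneg_nonneg)
  qed
qed

lemma set_integrable_const_Icc: "set_integrable lborel {p..q::real} (\<lambda>_. k::real)"
  unfolding set_integrable_def by (rule borel_integrable_compact) (auto simp: compact_Icc)

lemma integrable_indicator_Icc_const: "integrable lborel (\<lambda>\<xi>::real. indicator {p..q} \<xi> * (k::real))"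
  using set_integrable_const_Icc[of p q k] unfolding set_integrable_def by simp

lemma set_integrable_indicator_mult:
  fixes f :: "real \<Rightarrow> real"
  assumes "set_integrable lborel A f" "B \<in> sets lborel"
  shows "set_integrable lborel A (\<lambda>s. indicator B s * f s)"
proof -
  have "integrable lborel (\<lambda>s. indicator B s *\<^sub>R (indicator A s *\<^sub>R f s))"
    using integrable_mult_indicator[OF assms(2)] assms(1) unfolding set_integrable_def by blast
  then show ?thesis unfolding set_integrable_def by (simp add: mult_ac)
qed

lemma set_integral_split_Icc:
  fixes f :: "real \<Rightarrow> real"
  assumes "set_integrable lborel {a..c} f" "a \<le> b" "b \<le> c"
  shows "(\<integral>s\<in>{a..c}. f s \<partial>lborel) = (\<integral>s\<in>{a..b}. f s \<partial>lborel) + (\<integral>s\<in>{b<..c}. f s \<partial>lborel)"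
proof -
  have i1: "set_integrable lborel {a..b} f"
    by (rule set_integrable_subset[OF assms(1)]) (use assms in auto)
  have i2: "set_integrable lborel {b<..c} f"
    by (rule set_integrable_subset[OF assms(1)]) (use assms in auto)
  have "(\<integral>s\<in>{a..c}. f s \<partial>lborel) = (\<integral>s. indicator {a..b} s *\<^sub>R f s + indicator {b<..c} s *\<^sub>R f s \<partial>lborel)"
    unfolding set_lebesgue_integral_def using assms
    by (intro Bochner_Integration.integral_cong) (auto split: split_indicator)
  also have "\<dots> = (\<integral>s\<in>{a..b}. f s \<partial>lborel) + (\<integral>s\<in>{b<..c}. f s \<partial>lborel)"
    using i1 i2 unfolding set_integrable_def set_lebesgue_integral_def by simp
  finally show ?thesis .
qed

lemma set_integral_FTC_Icc:
  fixes F f :: "real \<Rightarrow> real"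
  assumes "a \<le> b" "continuous_on {a..b} f" "\<And>x. a \<le> x \<Longrightarrow> x \<le> b \<Longrightarrow> (F has_real_derivative f x) (at x)"
  shows "(\<integral>s\<in>{a..b}. f s \<partial>lborel) = F b - F a"
proof -
  have "(LBINT x=a..b. f x) = F b - F a"
    using assms by (intro interval_integral_FTC_finite)
      (auto simp: has_real_derivative_iff_has_vector_derivative intro: has_vector_derivative_at_within)
  then show ?thesis using interval_integral_Icc[OF assms(1), where f=f] by simp
qed

lemma set_integral_FTC_Ioc:
  fixes F f :: "real \<Rightarrow> real"
  assumes "a \<le> b" "continuous_on {a..b} f" "\<And>x. a \<le> x \<Longrightarrow> x \<le> b \<Longrightarrow> (F has_real_derivative f x) (at x)"
  shows "(\<integral>s\<in>{a<..b}. f s \<partial>lborel) = F b - F a"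
proof -
  have "(LBINT x=a..b. f x) = F b - F a"
    using assms by (intro interval_integral_FTC_finite)
      (auto simp: has_real_derivative_iff_has_vector_derivative intro: has_vector_derivative_at_within)
  then show ?thesis using interval_integral_Ioc[OF assms(1), where f=f] by simp
qed

lemma set_integral_Icc_same: "(\<integral>s\<in>{0..0::real}. f s \<partial>lborel) = (0::real)"
proof -
  have "(\<lambda>x. indicator {0..0::real} x *\<^sub>R f x) = (\<lambda>x. f 0 * indicator {0::real} x)"
    by (auto split: split_indicator)
  then show ?thesis unfolding set_lebesgue_integral_def by simp
qed

lemma set_integrable_exp_decay:
  assumes "\<rho> > (0::real)"
  shows "set_integrable lborel {0..} (\<lambda>t. exp (-\<rho> * t) * k)"
proof -
  have i1: "set_integrable lborel {0<..} (\<lambda>x. exp (-(x * \<rho>)))"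
    using integrable_I0i_exp_mscale[OF assms] .
  have i2: "set_integrable lborel {0..0} (\<lambda>x. exp (-(x * \<rho>)))"
    unfolding set_integrable_def by (rule borel_integrable_compact) (auto intro!: continuous_intros)
  have "integrable lborel (\<lambda>x. indicator {0<..} x *\<^sub>R exp (-(x * \<rho>)) + indicator {0..0} x *\<^sub>R exp (-(x * \<rho>)))"
    using i1 i2 unfolding set_integrable_def by auto
  then have "set_integrable lborel {0..} (\<lambda>x. exp (-(x * \<rho>)))"
    unfolding set_integrable_def
    by (rule back_subst[of "integrable lborel"]) (auto simp: fun_eq_iff split: split_indicator)
  then show ?thesis by (simp add: mult.commute)
qed

lemma continuous_on_atLeast_0_from_Icc:
  fixes f :: "real \<Rightarrow> real"
  assumes "\<And>N. N \<ge> 0 \<Longrightarrow> continuous_on {0..N} f"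
  shows "continuous_on {0..} f"
  unfolding continuous_on_eq_continuous_within
proof
  fix t :: real assume t: "t \<in> {0..}"
  have "continuous (at t within {0..t+1}) f"
    using assms[of "t+1"] t unfolding continuous_on_eq_continuous_within by auto
  moreover have "at t within {0..} = at t within {0..t+1}"
    by (rule at_within_nhd[of t "{..<t+1}"]) auto
  ultimately show "continuous (at t within {0..}) f" by simp
qed

lemma continuous_on_bounded_Icc:
  fixes x :: "real \<Rightarrow> real"
  assumes "continuous_on {0..} x" "s \<ge> 0"
  obtains B where "B \<ge> 0" "\<And>u. u \<in> {0..s} \<Longrightarrow> \<bar>x u\<bar> \<le> B"
proof -
  have "bounded (x ` {0..s})"
    by (intro compact_imp_bounded compact_continuous_image continuous_on_subset[OF assms(1)]) auto
  then obtain B where "B > 0" "\<forall>u\<in>{0..s}. \<bar>x u\<bar> \<le> B"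
    unfolding bounded_pos by auto
  then show ?thesis using that[of B] by auto
qed

lemma power_over_fact_tendsto_zero: "(\<lambda>n. M * (z::real)^n / fact n) \<longlonglongrightarrow> 0"
proof -
  have "(\<lambda>n. inverse (fact n) * z^n) \<longlonglongrightarrow> 0"
    by (rule summable_LIMSEQ_zero[OF summable_exp])
  then have "(\<lambda>n. M * (inverse (fact n) * z^n)) \<longlonglongrightarrow> M * 0" by (intro tendsto_mult tendsto_const)
  then show ?thesis by (simp add: field_simps)
qed

lemma abs_mult_le_weighted_squares:
  fixes x y e :: real
  assumes "e > 0"
  shows "\<bar>x * y\<bar> \<le> e / 2 * x^2 + 1 / (2 * e) * y^2"
proof -
  have "0 \<le> (e * \<bar>x\<bar> - \<bar>y\<bar>)^2" by simp
  then have "2 * e * \<bar>x * y\<bar> \<le> e^2 * x^2 + y^2"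
    by (simp add: power2_eq_square algebra_simps abs_mult abs_mult_self_eq)
  then have "\<bar>x * y\<bar> \<le> (e^2 * x^2 + y^2) / (2 * e)"
    using assms by (simp add: field_simps)
  also have "\<dots> = e / 2 * x^2 + 1 / (2 * e) * y^2"
    using assms by (simp add: field_simps power2_eq_square)
  finally show ?thesis .
qed

lemma sqrt_sum_squares_le_sum_abs: "sqrt (\<bar>u::real\<bar>^2 + \<bar>v\<bar>^2) \<le> \<bar>u\<bar> + \<bar>v\<bar>"
proof -
  have "\<bar>u\<bar>^2 + \<bar>v\<bar>^2 \<le> (\<bar>u\<bar> + \<bar>v\<bar>)^2" by (simp add: power2_eq_square algebra_simps)
  then have "sqrt (\<bar>u\<bar>^2 + \<bar>v\<bar>^2) \<le> sqrt ((\<bar>u\<bar> + \<bar>v\<bar>)^2)" by (rule real_sqrt_le_mono)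
  then show ?thesis by simp
qed

text \<open>The regularity of the data actually used: a is the primitive of a square integrable a'
  vanishing at -T, a is nonnegative, and f0 is globally C-Lipschitz (in the l1 sense), nondecreasing
  in its second argument with f0(0,0) >= 0.  These facts are derived from the standing assumptions
  in lemma delay_model_of_assumptions at the end.\<close>

locale delay_model =
  fixes T r C :: real and a a' :: "real \<Rightarrow> real" and f0 :: "real \<Rightarrow> real \<Rightarrow> real"
  assumes T_pos: "T > 0" and r_pos: "r > 0" and C_nn: "C \<ge> 0"
    and a'_L2: "inL2 T a'"
    and a_primitive: "\<And>s. s \<in> {-T..0} \<Longrightarrow> a s = (\<integral>u\<in>{-T..s}. a' u \<partial>lborel)"
    and a_nn: "\<And>s. s \<in> {-T..0} \<Longrightarrow> a s \<ge> 0"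
    and f0_lip: "\<And>x1 y1 x2 y2. \<bar>f0 x1 y1 - f0 x2 y2\<bar> \<le> C * (\<bar>x1 - x2\<bar> + \<bar>y1 - y2\<bar>)"
    and f0_mono: "\<And>x y1 y2. y1 \<le> y2 \<Longrightarrow> f0 x y1 \<le> f0 x y2"
    and f0_00: "f0 0 0 \<ge> 0"
begin

definition da_ext :: "real \<Rightarrow> real" where "da_ext = (\<lambda>w. indicator {-T..0} w * a' w)"

lemma da_ext_integrable: "integrable lborel da_ext"
  using inL2_set_integrable[OF a'_L2] unfolding da_ext_def set_integrable_def by simp

lemma a_continuous: "continuous_on {-T..0} a"
proof -
  have "set_integrable lborel {-T..b} da_ext" for b
    unfolding set_integrable_def by (rule integrable_mult_indicator[OF _ da_ext_integrable]) auto
  then have c: "continuous_on UNIV (\<lambda>b. LBINT x:{-T..b}. da_ext x)"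
    by (intro continuous_on_LBINT)
  have "a s = (LBINT x:{-T..s}. da_ext x)" if "s \<in> {-T..0}" for s
    unfolding a_primitive[OF that] da_ext_def
    by (intro set_lebesgue_integral_cong) (use that in auto)
  then show ?thesis
    using continuous_on_subset[OF c] by (subst continuous_on_cong[OF refl]) auto
qed

definition a_max :: real where "a_max = (SOME A. A > 0 \<and> (\<forall>s\<in>{-T..0}. \<bar>a s\<bar> \<le> A))"

lemma a_max_bound: "a_max > 0" "\<And>s. s \<in> {-T..0} \<Longrightarrow> \<bar>a s\<bar> \<le> a_max"
proof -
  have "bounded (a ` {-T..0})"
    by (intro compact_imp_bounded compact_continuous_image a_continuous) auto
  then obtain A where "A > 0" "\<forall>s\<in>{-T..0}. \<bar>a s\<bar> \<le> A"
    unfolding bounded_pos by auto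
  then have "\<exists>A. A > 0 \<and> (\<forall>s\<in>{-T..0}. \<bar>a s\<bar> \<le> A)" by blast
  then have "a_max > 0 \<and> (\<forall>s\<in>{-T..0}. \<bar>a s\<bar> \<le> a_max)"
    unfolding a_max_def by (rule someI_ex)
  then show "a_max > 0" "\<And>s. s \<in> {-T..0} \<Longrightarrow> \<bar>a s\<bar> \<le> a_max" by auto
qed

definition a_ext :: "real \<Rightarrow> real" where "a_ext = (\<lambda>u. indicator {-T..0} u * a u)"

lemma a_ext_measurable[measurable]: "a_ext \<in> borel_measurable borel"
  unfolding a_ext_def
  using borel_measurable_continuous_on_indicator[OF _ a_continuous] by simp

lemma a_ext_bound: "\<bar>a_ext u\<bar> \<le> a_max"
  unfolding a_ext_def using a_max_bound by (auto split: split_indicator)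

definition is_path :: "(real \<Rightarrow> real) \<Rightarrow> (real \<Rightarrow> real) \<Rightarrow> bool" where
  "is_path g x \<longleftrightarrow> inL2 T g \<and> (\<forall>t<0. x t = g t) \<and> continuous_on {0..} x"

definition hist :: "(real \<Rightarrow> real) \<Rightarrow> real \<Rightarrow> real" where
  "hist g = (\<lambda>u. indicator {-T..<0} u * g u)"

definition traj :: "(real \<Rightarrow> real) \<Rightarrow> real \<Rightarrow> real" where
  "traj x = (\<lambda>u. indicator {0..} u * x u)"

definition glued :: "(real \<Rightarrow> real) \<Rightarrow> (real \<Rightarrow> real) \<Rightarrow> real \<Rightarrow> real" where
  "glued g x = (\<lambda>u. hist g u + traj x u)"

lemma hist_integrable:
  assumes "inL2 T g"
  shows "integrable lborel (hist g)"
proof -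
  have "integrable lborel (\<lambda>u. indicator {-T..<0} u *\<^sub>R (indicator {-T..0} u *\<^sub>R g u))"
    using inL2_set_integrable[OF assms] unfolding set_integrable_def
    by (rule integrable_mult_indicator[rotated]) auto
  then show ?thesis unfolding hist_def
    by (rule back_subst[of "integrable lborel"]) (auto split: split_indicator)
qed

lemma hist_measurable[measurable]: "inL2 T g \<Longrightarrow> hist g \<in> borel_measurable borel"
  using hist_integrable[of g] borel_measurable_integrable by simp

lemma traj_measurable: "continuous_on {0..} x \<Longrightarrow> traj x \<in> borel_measurable borel"
  unfolding traj_def using borel_measurable_continuous_on_indicator[of "{0..}" x] by simp

lemma glued_measurable:
  assumes "is_path g x"
  shows "glued g x \<in> borel_measurable borel"
proof -
  have "hist g \<in> borel_measurable borel" "traj x \<in> borel_measurable borel"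
    using assms hist_measurable traj_measurable unfolding is_path_def by auto
  then show ?thesis unfolding glued_def by (rule borel_measurable_add)
qed

definition delay_int :: "(real \<Rightarrow> real) \<Rightarrow> real \<Rightarrow> real" where
  "delay_int x s = (\<integral>\<xi>\<in>{-T..0}. a \<xi> * x (s + \<xi>) \<partial>lborel)"

definition drift :: "(real \<Rightarrow> real) \<Rightarrow> (real \<Rightarrow> real) \<Rightarrow> real \<Rightarrow> real" where
  "drift x c s = r * x s + f0 (x s) (delay_int x s) - c s"

text \<open>For s >= 0 the delay term only sees the glued path, which is a measurable function on the line.\<close>

lemma delay_int_glued:
  assumes "\<forall>t<0. x t = g t" "s \<ge> 0"
  shows "(\<lambda>\<xi>. indicator {-T..0} \<xi> *\<^sub>R (a \<xi> * x (s + \<xi>))) = (\<lambda>\<xi>. a_ext \<xi> * glued g x (s + \<xi>))"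
    and "delay_int x s = (\<integral>\<xi>. a_ext \<xi> * glued g x (s + \<xi>) \<partial>lborel)"
proof -
  show *: "(\<lambda>\<xi>. indicator {-T..0} \<xi> *\<^sub>R (a \<xi> * x (s + \<xi>))) = (\<lambda>\<xi>. a_ext \<xi> * glued g x (s + \<xi>))"
    using assms unfolding a_ext_def glued_def hist_def traj_def by (auto split: split_indicator)
  show "delay_int x s = (\<integral>\<xi>. a_ext \<xi> * glued g x (s + \<xi>) \<partial>lborel)"
    unfolding delay_int_def set_lebesgue_integral_def * ..
qed

lemma f0_continuous: "continuous_on UNIV (\<lambda>p. f0 (fst p) (snd p))"
proof (rule lipschitz_on_continuous_on)
  show "(2*C)-lipschitz_on UNIV (\<lambda>p. f0 (fst p) (snd p))"
  proof (rule lipschitz_onI)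
    fix p q :: "real \<times> real"
    have "dist (f0 (fst p) (snd p)) (f0 (fst q) (snd q)) \<le> C * (\<bar>fst p - fst q\<bar> + \<bar>snd p - snd q\<bar>)"
      using f0_lip by (simp add: dist_real_def)
    also have "\<dots> \<le> C * (dist p q + dist p q)"
      using dist_fst_le[of p q] dist_snd_le[of p q] C_nn
      by (intro mult_left_mono add_mono) (auto simp: dist_real_def)
    finally show "dist (f0 (fst p) (snd p)) (f0 (fst q) (snd q)) \<le> 2 * C * dist p q" by simp
  qed (use C_nn in auto)
qed

lemma f0_compose_measurable:
  assumes "u \<in> borel_measurable M" "v \<in> borel_measurable M"
  shows "(\<lambda>s. f0 (u s) (v s)) \<in> borel_measurable M"
proof -
  have f: "(\<lambda>p. f0 (fst p) (snd p)) \<in> borel_measurable borel"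
    using borel_measurable_continuous_onI[OF f0_continuous] by simp
  have "(\<lambda>s. (u s, v s)) \<in> borel_measurable M"
    using assms by measurable
  from measurable_compose[OF this f] show ?thesis by simp
qed

lemma f0_growth: "\<bar>f0 x y\<bar> \<le> \<bar>f0 0 0\<bar> + C * (\<bar>x\<bar> + \<bar>y\<bar>)"
  using f0_lip[of x y 0 0] by simp

lemma integrable_a_hist:
  assumes "inL2 T g"
  shows "integrable lborel (\<lambda>\<xi>. a_ext \<xi> * hist g (s + \<xi>))"
proof (rule Bochner_Integration.integrable_bound[of _ "\<lambda>\<xi>. a_max * hist g (s + \<xi>)"])
  have [measurable]: "hist g \<in> borel_measurable borel" using assms by (rule hist_measurable)
  have "integrable lborel (\<lambda>\<xi>. hist g (s + 1 * \<xi>))"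
    by (rule lborel_integrable_real_affine[OF hist_integrable[OF assms]]) simp
  then show "integrable lborel (\<lambda>\<xi>. a_max * hist g (s + \<xi>))" by simp
  show "(\<lambda>\<xi>. a_ext \<xi> * hist g (s + \<xi>)) \<in> borel_measurable lborel" by measurable
  show "AE x in lborel. norm (a_ext x * hist g (s + x)) \<le> norm (a_max * hist g (s + x))"
    using a_ext_bound a_max_bound by (intro AE_I2) (auto simp: abs_mult intro: mult_right_mono)
qed

lemma a_traj_bound:
  assumes "s \<ge> 0" "\<And>u. u \<in> {0..s} \<Longrightarrow> \<bar>x u\<bar> \<le> B"
  shows "\<bar>a_ext \<xi> * traj x (s + \<xi>)\<bar> \<le> indicator {-T..0} \<xi> * (a_max * B)"
proof (cases "\<xi> \<in> {-T..0} \<and> s + \<xi> \<ge> 0")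
  case True
  then have "\<bar>x (s + \<xi>)\<bar> \<le> B" using assms(2) by auto
  moreover have "\<bar>a \<xi>\<bar> \<le> a_max" using a_max_bound True by auto
  ultimately show ?thesis using True unfolding a_ext_def traj_def
    by (auto simp: abs_mult intro: mult_mono)
next
  case False
  then show ?thesis unfolding a_ext_def traj_def using a_max_bound(1) assms(1) assms(2)[of 0]
    by (auto split: split_indicator)
qed

lemma integrable_a_traj:
  assumes "continuous_on {0..} x" "s \<ge> 0" "\<And>u. u \<in> {0..s} \<Longrightarrow> \<bar>x u\<bar> \<le> B"
  shows "integrable lborel (\<lambda>\<xi>. a_ext \<xi> * traj x (s + \<xi>))"
proof (rule Bochner_Integration.integrable_bound[OF integrable_indicator_Icc_const])
  have [measurable]: "traj x \<in> borel_measurable borel" using assms by (intro traj_measurable)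
  show "(\<lambda>\<xi>. a_ext \<xi> * traj x (s + \<xi>)) \<in> borel_measurable lborel" by measurable
  show "AE \<xi> in lborel. norm (a_ext \<xi> * traj x (s + \<xi>)) \<le> norm (indicator {-T..0} \<xi> * (a_max * B))"
    using a_traj_bound[OF assms(2,3)] by (intro AE_I2) (auto intro: order_trans[OF _ abs_ge_self])
qed

lemma integrable_a_glued:
  assumes "is_path g x" "s \<ge> 0"
  shows "integrable lborel (\<lambda>\<xi>. a_ext \<xi> * glued g x (s + \<xi>))"
proof -
  obtain B where "B \<ge> 0" "\<And>u. u \<in> {0..s} \<Longrightarrow> \<bar>x u\<bar> \<le> B"
    using continuous_on_bounded_Icc[of x s] assms unfolding is_path_def by blast
  then have "integrable lborel (\<lambda>\<xi>. a_ext \<xi> * hist g (s + \<xi>) + a_ext \<xi> * traj x (s + \<xi>))"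
    using assms integrable_a_hist[of g s] integrable_a_traj[of x s B] unfolding is_path_def
    by (intro Bochner_Integration.integrable_add) auto
  then show ?thesis unfolding glued_def by (simp add: distrib_left)
qed

lemma delay_int_integrable:
  assumes "is_path g x" "s \<ge> 0"
  shows "set_integrable lborel {-T..0} (\<lambda>\<xi>. a \<xi> * x (s + \<xi>))"
  unfolding set_integrable_def using delay_int_glued(1)[of x g s] assms integrable_a_glued[OF assms]
  unfolding is_path_def by simp

definition hist_L1 :: "(real \<Rightarrow> real) \<Rightarrow> real" where "hist_L1 g = (\<integral>u. \<bar>hist g u\<bar> \<partial>lborel)"

lemma delay_int_bound:
  assumes "is_path g x" "s \<ge> 0" "\<And>u. u \<in> {0..s} \<Longrightarrow> \<bar>x u\<bar> \<le> B"
  shows "\<bar>delay_int x s\<bar> \<le> a_max * (hist_L1 g + T * B)"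
proof -
  have L2: "inL2 T g" and c: "continuous_on {0..} x" and e: "\<forall>t<0. x t = g t"
    using assms unfolding is_path_def by auto
  have i1: "integrable lborel (\<lambda>\<xi>. a_ext \<xi> * hist g (s + \<xi>))" using integrable_a_hist[OF L2] .
  have i2: "integrable lborel (\<lambda>\<xi>. a_ext \<xi> * traj x (s + \<xi>))" using integrable_a_traj[OF c assms(2,3)] .
  have "delay_int x s = (\<integral>\<xi>. a_ext \<xi> * hist g (s + \<xi>) \<partial>lborel) + (\<integral>\<xi>. a_ext \<xi> * traj x (s + \<xi>) \<partial>lborel)"
    unfolding delay_int_glued(2)[OF e assms(2)] glued_def distrib_left
    by (rule Bochner_Integration.integral_add[OF i1 i2])
  moreover have "\<bar>\<integral>\<xi>. a_ext \<xi> * hist g (s + \<xi>) \<partial>lborel\<bar> \<le> a_max * hist_L1 g"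
  proof -
    have ia: "integrable lborel (\<lambda>\<xi>. \<bar>hist g (s + 1 * \<xi>)\<bar>)"
      by (rule lborel_integrable_real_affine[OF integrable_abs[OF hist_integrable[OF L2]]]) simp
    have "\<bar>\<integral>\<xi>. a_ext \<xi> * hist g (s + \<xi>) \<partial>lborel\<bar> \<le> (\<integral>\<xi>. a_max * \<bar>hist g (s + \<xi>)\<bar> \<partial>lborel)"
      using ia a_ext_bound a_max_bound(1)
      by (intro integral_abs_bound_integral i1) (auto simp: abs_mult intro: mult_right_mono)
    also have "\<dots> = a_max * (\<integral>\<xi>. \<bar>hist g (s + 1 * \<xi>)\<bar> \<partial>lborel)" by simp
    also have "(\<integral>\<xi>. \<bar>hist g (s + 1 * \<xi>)\<bar> \<partial>lborel) = hist_L1 g"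
      unfolding hist_L1_def using lborel_integral_real_affine[of 1 "\<lambda>u. \<bar>hist g u\<bar>" s] by simp
    finally show ?thesis .
  qed
  moreover have "\<bar>\<integral>\<xi>. a_ext \<xi> * traj x (s + \<xi>) \<partial>lborel\<bar> \<le> a_max * (T * B)"
  proof -
    have "\<bar>\<integral>\<xi>. a_ext \<xi> * traj x (s + \<xi>) \<partial>lborel\<bar> \<le> (\<integral>\<xi>. indicator {-T..0} \<xi> * (a_max * B) \<partial>lborel)"
      using a_traj_bound[OF assms(2,3)] by (intro integral_abs_bound_integral i2 integrable_indicator_Icc_const)
    also have "\<dots> = T * (a_max * B)" using T_pos by simp
    finally show ?thesis by (simp add: algebra_simps)
  qed
  ultimately show ?thesis by (simp add: algebra_simps)
qed

lemma delay_int_diff: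
  assumes "is_path g x" "is_path g y" "s \<ge> 0" "\<And>u. u \<in> {0..s} \<Longrightarrow> \<bar>x u - y u\<bar> \<le> \<beta>"
  shows "\<bar>delay_int x s - delay_int y s\<bar> \<le> a_max * T * \<beta>"
proof -
  have ex: "\<forall>t<0. x t = g t" and ey: "\<forall>t<0. y t = g t"
    using assms unfolding is_path_def by auto
  have ix: "integrable lborel (\<lambda>\<xi>. a_ext \<xi> * glued g x (s + \<xi>))" using integrable_a_glued[OF assms(1,3)] .
  have iy: "integrable lborel (\<lambda>\<xi>. a_ext \<xi> * glued g y (s + \<xi>))" using integrable_a_glued[OF assms(2,3)] .
  have eq: "delay_int x s - delay_int y s = (\<integral>\<xi>. a_ext \<xi> * glued g x (s + \<xi>) - a_ext \<xi> * glued g y (s + \<xi>) \<partial>lborel)"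
    unfolding delay_int_glued(2)[OF ex assms(3)] delay_int_glued(2)[OF ey assms(3)]
    by (rule Bochner_Integration.integral_diff[OF ix iy, symmetric])
  have pointwise: "a_ext \<xi> * glued g x (s + \<xi>) - a_ext \<xi> * glued g y (s + \<xi>) = a_ext \<xi> * traj (\<lambda>u. x u - y u) (s + \<xi>)" for \<xi>
    unfolding glued_def traj_def by (simp add: algebra_simps)
  have "\<bar>(\<integral>\<xi>. a_ext \<xi> * glued g x (s + \<xi>) - a_ext \<xi> * glued g y (s + \<xi>) \<partial>lborel)\<bar> \<le> (\<integral>\<xi>. indicator {-T..0} \<xi> * (a_max * \<beta>) \<partial>lborel)"
    unfolding pointwise
  proof (rule integral_abs_bound_integral[OF _ integrable_indicator_Icc_const])
    show "integrable lborel (\<lambda>\<xi>. a_ext \<xi> * traj (\<lambda>u. x u - y u) (s + \<xi>))"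
      using Bochner_Integration.integrable_diff[OF ix iy] unfolding pointwise .
    show "\<bar>a_ext \<xi> * traj (\<lambda>u. x u - y u) (s + \<xi>)\<bar> \<le> indicator {-T..0} \<xi> * (a_max * \<beta>)" for \<xi>
      using a_traj_bound[of s "\<lambda>u. x u - y u" \<beta> \<xi>] assms(3,4) by simp
  qed
  also have "\<dots> = T * (a_max * \<beta>)" using T_pos by simp
  finally show ?thesis unfolding eq by (simp add: algebra_simps)
qed

lemma delay_int_measurable:
  assumes "is_path g x"
  shows "(\<lambda>s. \<integral>\<xi>. a_ext \<xi> * glued g x (s + \<xi>) \<partial>lborel) \<in> borel_measurable borel"
proof -
  have hm: "glued g x \<in> borel_measurable borel" using glued_measurable[OF assms] .
  have sum: "(\<lambda>p::real\<times>real. fst p + snd p) \<in> borel_measurable borel"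
    by (intro borel_measurable_continuous_onI continuous_intros)
  have snd: "(\<lambda>p::real\<times>real. snd p) \<in> borel_measurable borel"
    by (intro borel_measurable_continuous_onI continuous_intros)
  have "(\<lambda>p::real\<times>real. a_ext (snd p) * glued g x (fst p + snd p)) \<in> borel_measurable borel"
    using measurable_compose[OF sum hm] measurable_compose[OF snd a_ext_measurable]
    by (intro borel_measurable_times) (auto simp: comp_def)
  then have "(\<lambda>(s, \<xi>). a_ext \<xi> * glued g x (s + \<xi>)) \<in> borel_measurable (lborel \<Otimes>\<^sub>M lborel)"
    unfolding lborel_prod by (simp add: case_prod_beta)
  then have "(\<lambda>s. \<integral>\<xi>. a_ext \<xi> * glued g x (s + \<xi>) \<partial>lborel) \<in> borel_measurable lborel"
    by (rule lborel.borel_measurable_lebesgue_integral)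
  then show ?thesis by simp
qed

lemma drift_integrable:
  assumes "is_path g x" "t \<ge> 0" "set_integrable lborel {0..t} c"
  shows "set_integrable lborel {0..t} (drift x c)"
proof -
  obtain B where B: "B \<ge> 0" "\<And>u. u \<in> {0..t} \<Longrightarrow> \<bar>x u\<bar> \<le> B"
    using continuous_on_bounded_Icc[of x t] assms unfolding is_path_def by blast
  define K where "K = r * B + \<bar>f0 0 0\<bar> + C * (B + a_max * (hist_L1 g + T * B))"
  have "set_integrable lborel {0..t} (\<lambda>s. r * x s + f0 (x s) (delay_int x s))"
  proof (rule set_integrable_bound[OF set_integrable_const_Icc[of 0 t K]])
    define Yg where "Yg = (\<lambda>s. \<integral>\<xi>. a_ext \<xi> * glued g x (s + \<xi>) \<partial>lborel)"
    have [measurable]: "traj x \<in> borel_measurable borel" "Yg \<in> borel_measurable borel"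
      using assms traj_measurable delay_int_measurable unfolding is_path_def Yg_def by auto
    have m: "(\<lambda>s. f0 (traj x s) (Yg s)) \<in> borel_measurable borel"
      by (rule f0_compose_measurable) auto
    have "(\<lambda>s. indicator {0..t} s *\<^sub>R (r * x s + f0 (x s) (delay_int x s))) =
          (\<lambda>s. indicator {0..t} s * (r * traj x s + f0 (traj x s) (Yg s)))"
      using delay_int_glued(2)[of x g] assms(1) unfolding traj_def Yg_def is_path_def
      by (auto simp: fun_eq_iff split: split_indicator)
    then show "set_borel_measurable lborel {0..t} (\<lambda>s. r * x s + f0 (x s) (delay_int x s))"
      unfolding set_borel_measurable_def using m by simp
    show "AE s in lborel. s \<in> {0..t} \<longrightarrow> norm (r * x s + f0 (x s) (delay_int x s)) \<le> norm K"
    proof (intro AE_I2 impI)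
      fix s assume s: "s \<in> {0..t}"
      have bx: "\<bar>x s\<bar> \<le> B" using B s by auto
      have bY: "\<bar>delay_int x s\<bar> \<le> a_max * (hist_L1 g + T * B)"
        using s B by (intro delay_int_bound[OF assms(1)]) auto
      have "\<bar>f0 (x s) (delay_int x s)\<bar> \<le> \<bar>f0 0 0\<bar> + C * (B + a_max * (hist_L1 g + T * B))"
        using f0_growth[of "x s" "delay_int x s"] bx bY C_nn
        by (smt (verit, best) mult_left_mono)
      moreover have "\<bar>r * x s\<bar> \<le> r * B" using bx r_pos by (simp add: abs_mult)
      ultimately have "\<bar>r * x s + f0 (x s) (delay_int x s)\<bar> \<le> K" unfolding K_def by linarith
      then show "norm (r * x s + f0 (x s) (delay_int x s)) \<le> norm K" by simp
    qed
  qed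
  then show ?thesis unfolding drift_def using assms(3) by (rule set_integral_diff(1))
qed

definition L_drift :: real where "L_drift = r + C + C * a_max * T"

lemma L_drift_pos: "L_drift > 0"
  unfolding L_drift_def using r_pos C_nn a_max_bound(1) T_pos by (simp add: add_pos_nonneg)

lemma drift_lipschitz:
  assumes "is_path g x" "is_path g y" "s \<ge> 0" "\<And>u. u \<in> {0..s} \<Longrightarrow> \<bar>x u - y u\<bar> \<le> \<beta>"
  shows "\<bar>drift x c s - drift y c s\<bar> \<le> L_drift * \<beta>"
proof -
  have yd: "\<bar>delay_int x s - delay_int y s\<bar> \<le> a_max * T * \<beta>" by (rule delay_int_diff[OF assms])
  have xd: "\<bar>x s - y s\<bar> \<le> \<beta>" using assms(3,4) by auto
  have "\<bar>drift x c s - drift y c s\<bar> = \<bar>r * (x s - y s) + (f0 (x s) (delay_int x s) - f0 (y s) (delay_int y s))\<bar>"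
    unfolding drift_def by (simp add: algebra_simps)
  also have "\<dots> \<le> r * \<bar>x s - y s\<bar> + C * (\<bar>x s - y s\<bar> + \<bar>delay_int x s - delay_int y s\<bar>)"
  proof -
    have "\<bar>r * (x s - y s)\<bar> = r * \<bar>x s - y s\<bar>" using r_pos by (simp add: abs_mult)
    then show ?thesis
      using abs_triangle_ineq[of "r * (x s - y s)" "f0 (x s) (delay_int x s) - f0 (y s) (delay_int y s)"]
        f0_lip[of "x s" "delay_int x s" "y s" "delay_int y s"] by linarith
  qed
  also have "\<dots> \<le> r * \<beta> + C * (\<beta> + a_max * T * \<beta>)"
    using xd yd r_pos C_nn by (intro add_mono mult_left_mono) auto
  also have "\<dots> = L_drift * \<beta>" unfolding L_drift_def by (simp add: algebra_simps)
  finally show ?thesis .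
qed

section \<open>Well-posedness of the state equation\<close>

text \<open>Controls which are integrable on every [0,t], and the Picard operator of the state equation
  with history g and initial value x0; states are exactly the fixed points of this operator that
  are paths.\<close>

definition loc_int :: "(real \<Rightarrow> real) \<Rightarrow> bool" where
  "loc_int c \<longleftrightarrow> (\<forall>t\<ge>0. set_integrable lborel {0..t} c)"

definition picard :: "(real \<Rightarrow> real) \<Rightarrow> real \<Rightarrow> (real \<Rightarrow> real) \<Rightarrow> (real \<Rightarrow> real) \<Rightarrow> real \<Rightarrow> real" where
  "picard g x0 c x = (\<lambda>t. if t < 0 then g t else x0 + (\<integral>s\<in>{0..t}. drift x c s \<partial>lborel))"

lemma picard_at_0: "picard g x0 c x 0 = x0"
  unfolding picard_def using set_integral_Icc_same by simp

lemma picard_path: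
  assumes "is_path g x" "loc_int c"
  shows "is_path g (picard g x0 c x)"
proof -
  have c0: "continuous_on UNIV (\<lambda>b. LBINT s:{0..b}. drift x c s)"
    using drift_integrable[OF assms(1)] assms(2) unfolding loc_int_def by (intro continuous_on_LBINT) auto
  have "continuous_on {0..} (\<lambda>b. x0 + (LBINT s:{0..b}. drift x c s))"
    using continuous_on_subset[OF c0, of "{0..}"] by (intro continuous_on_add continuous_on_const) auto
  then have "continuous_on {0..} (picard g x0 c x)"
    by (rule continuous_on_cong[THEN iffD1, rotated 2]) (auto simp: picard_def)
  then show ?thesis using assms(1) unfolding is_path_def picard_def by auto
qed

lemma picard_step_bound:
  assumes "is_path g x" "is_path g y" "loc_int c" "t \<ge> 0"
    and B_mono: "\<And>u s. 0 \<le> u \<Longrightarrow> u \<le> s \<Longrightarrow> s \<le> t \<Longrightarrow> B u \<le> B s"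
    and B_int: "set_integrable lborel {0..t} B"
    and xy: "\<And>s. s \<in> {0..t} \<Longrightarrow> \<bar>x s - y s\<bar> \<le> B s"
  shows "\<bar>picard g x0 c x t - picard g x0 c y t\<bar> \<le> (\<integral>s\<in>{0..t}. L_drift * B s \<partial>lborel)"
proof -
  have ic: "set_integrable lborel {0..t} c" using assms(3,4) unfolding loc_int_def by auto
  have ix: "set_integrable lborel {0..t} (drift x c)" using drift_integrable[OF assms(1,4) ic] .
  have iy: "set_integrable lborel {0..t} (drift y c)" using drift_integrable[OF assms(2,4) ic] .
  have pt: "\<bar>drift x c s - drift y c s\<bar> \<le> L_drift * B s" if s: "s \<in> {0..t}" for s
    by (rule drift_lipschitz[OF assms(1,2)]) (use s xy B_mono in \<open>auto intro: order_trans\<close>)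
  have iB: "set_integrable lborel {0..t} (\<lambda>s. L_drift * B s)" using B_int by auto
  have iD: "set_integrable lborel {0..t} (\<lambda>s. drift x c s - drift y c s)" using ix iy by auto
  have eq: "picard g x0 c x t - picard g x0 c y t = (\<integral>s\<in>{0..t}. drift x c s - drift y c s \<partial>lborel)"
    unfolding picard_def using assms(4) set_integral_diff(2)[OF ix iy] by auto
  have "(\<integral>s\<in>{0..t}. drift x c s - drift y c s \<partial>lborel) \<le> (\<integral>s\<in>{0..t}. L_drift * B s \<partial>lborel)"
    using pt by (intro set_integral_mono[OF iD iB]) (auto simp: abs_le_iff)
  moreover have "- (\<integral>s\<in>{0..t}. drift x c s - drift y c s \<partial>lborel) \<le> (\<integral>s\<in>{0..t}. L_drift * B s \<partial>lborel)"
    using pt set_integral_diff(1)[OF iy ix]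
    by (subst set_integral_uminus[OF iD, symmetric], intro set_integral_mono[OF _ iB])
      (auto simp: abs_le_iff)
  ultimately show ?thesis unfolding eq by linarith
qed

lemma integral_power_over_fact:
  assumes "t \<ge> 0"
  shows "(\<integral>s\<in>{0..t}. L_drift * (M * (L_drift * s)^n / fact n) \<partial>lborel) = M * (L_drift * t)^(Suc n) / fact (Suc n)"
proof -
  have "(\<integral>s\<in>{0..t}. L_drift * (M * (L_drift * s)^n / fact n) \<partial>lborel) =
        (\<integral>s. s^n * indicator {0..t} s \<partial>lborel) * (L_drift^(Suc n) * M / fact n)"
    unfolding set_lebesgue_integral_def
    by (subst integral_mult_left_zero[symmetric], rule Bochner_Integration.integral_cong)
      (auto simp: power_mult_distrib mult_ac split: split_indicator)
  also have "\<dots> = t^Suc n / Suc n * (L_drift^(Suc n) * M / fact n)"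
    using integral_power[of 0 t n] assms by simp
  also have "\<dots> = M * (L_drift * t)^(Suc n) / fact (Suc n)"
    by (simp add: power_mult_distrib field_simps)
  finally show ?thesis .
qed

lemma picard_iterates_close:
  assumes gu: "\<And>n. is_path g (u n)" and gv: "\<And>n. is_path g (v n)"
    and su: "\<And>n. u (Suc n) = picard g x0 c (u n)" and sv: "\<And>n. v (Suc n) = picard g x0 c (v n)"
    and c: "loc_int c" and M: "M \<ge> 0" and start: "\<And>t. t \<in> {0..N} \<Longrightarrow> \<bar>u 0 t - v 0 t\<bar> \<le> M"
  shows "t \<in> {0..N} \<Longrightarrow> \<bar>u n t - v n t\<bar> \<le> M * (L_drift * t)^n / fact n"
proof (induction n arbitrary: t)
  case 0
  then show ?case using start by simp
next
  case (Suc n)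
  have t: "t \<ge> 0" using Suc.prems by auto
  have "\<bar>picard g x0 c (u n) t - picard g x0 c (v n) t\<bar> \<le> (\<integral>s\<in>{0..t}. L_drift * (M * (L_drift * s)^n / fact n) \<partial>lborel)"
  proof (rule picard_step_bound[OF gu gv c t])
    show "M * (L_drift * u') ^ n / fact n \<le> M * (L_drift * s) ^ n / fact n" if "0 \<le> u'" "u' \<le> s" "s \<le> t" for u' s
      using that L_drift_pos M by (intro divide_right_mono mult_left_mono power_mono) auto
    show "set_integrable lborel {0..t} (\<lambda>s. M * (L_drift * s) ^ n / fact n)"
      unfolding set_integrable_def by (rule borel_integrable_compact) (auto simp: compact_Icc intro!: continuous_intros)
    show "\<bar>u n s - v n s\<bar> \<le> M * (L_drift * s) ^ n / fact n" if "s \<in> {0..t}" for s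
      using that Suc.prems by (intro Suc.IH) auto
  qed
  then show ?case unfolding su sv integral_power_over_fact[OF t] .
qed

text \<open>Uniqueness: two fixed points with the same history are closer than any M (Lt)^n/n!.\<close>

lemma picard_fixpoint_unique:
  assumes "is_path g x" "is_path g y" "loc_int c" "x = picard g x0 c x" "y = picard g x0 c y"
  shows "x = y"
proof
  fix t
  show "x t = y t"
  proof (cases "t < 0")
    case True then show ?thesis using assms(1,2) unfolding is_path_def by auto
  next
    case False
    then have t: "t \<ge> 0" by simp
    have cc: "continuous_on {0..} (\<lambda>s. x s - y s)"
      using assms(1,2) unfolding is_path_def by (intro continuous_on_diff) auto
    obtain M where M: "M \<ge> 0" "\<And>s. s \<in> {0..t} \<Longrightarrow> \<bar>x s - y s\<bar> \<le> M"
      using continuous_on_bounded_Icc[OF cc t] by blast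
    have "\<bar>x t - y t\<bar> \<le> M * (L_drift * t)^n / fact n" for n
      using picard_iterates_close[where u="\<lambda>_. x" and v="\<lambda>_. y" and M=M and N=t and t=t and n=n]
        assms M t by auto
    then have "\<bar>x t - y t\<bar> \<le> 0"
      by (intro tendsto_le[OF trivial_limit_sequentially power_over_fact_tendsto_zero[of M "L_drift * t"]
            tendsto_const]) auto
    then show ?thesis by simp
  qed
qed

text \<open>Existence: the Picard iterates starting from the constant path converge locally uniformly
  on [0,oo), being the partial sums of a series dominated by an exponential series.\<close>

primrec picard_iter :: "(real \<Rightarrow> real) \<Rightarrow> real \<Rightarrow> (real \<Rightarrow> real) \<Rightarrow> nat \<Rightarrow> real \<Rightarrow> real" where
  "picard_iter g x0 c 0 = (\<lambda>t. if t < 0 then g t else x0)"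
| "picard_iter g x0 c (Suc n) = picard g x0 c (picard_iter g x0 c n)"

definition picard_limit :: "(real \<Rightarrow> real) \<Rightarrow> real \<Rightarrow> (real \<Rightarrow> real) \<Rightarrow> real \<Rightarrow> real" where
  "picard_limit g x0 c t = (if t < 0 then g t
     else x0 + (\<Sum>i. picard_iter g x0 c (Suc i) t - picard_iter g x0 c i t))"

lemma picard_iter_path:
  assumes "inL2 T g" "loc_int c"
  shows "is_path g (picard_iter g x0 c n)"
proof (induction n)
  case 0
  have "continuous_on {0..} (\<lambda>t::real. x0)" by (rule continuous_on_const)
  then have "continuous_on {0..} (\<lambda>t. if t < 0 then g t else x0)"
    by (rule continuous_on_cong[THEN iffD1, rotated 2]) auto
  then show ?case using assms unfolding is_path_def by auto
next
  case (Suc n)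
  then show ?case using picard_path[OF _ assms(2)] by simp
qed

lemma picard_iter_uniform_limit:
  assumes g: "inL2 T g" and c: "loc_int c" and N: "N \<ge> 0"
  shows "uniform_limit {0..N} (picard_iter g x0 c) (picard_limit g x0 c) sequentially"
proof -
  define p where "p = picard_iter g x0 c"
  have gp: "is_path g (p n)" for n unfolding p_def using picard_iter_path[OF g c] .
  define d where "d i t = p (Suc i) t - p i t" for i t
  have partial_sums: "p n t = x0 + (\<Sum>i<n. d i t)" if "t \<ge> 0" for n t
  proof -
    have "(\<Sum>i<n. d i t) = p n t - p 0 t" unfolding d_def by (rule sum_lessThan_telescope)
    moreover have "p 0 t = x0" using that by (simp add: p_def)
    ultimately show ?thesis by simp
  qed
  have cc: "continuous_on {0..} (\<lambda>t. p 1 t - p 0 t)"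
    using gp[of 1] gp[of 0] unfolding is_path_def by (intro continuous_on_diff) auto
  obtain M where M: "M \<ge> 0" "\<And>t. t \<in> {0..N} \<Longrightarrow> \<bar>p 1 t - p 0 t\<bar> \<le> M"
    using continuous_on_bounded_Icc[OF cc N] by blast
  have bd: "\<bar>d n t\<bar> \<le> M * (L_drift * N)^n / fact n" if t: "t \<in> {0..N}" for n t
  proof -
    have "\<bar>p (Suc n) t - p n t\<bar> \<le> M * (L_drift * t)^n / fact n"
      using picard_iterates_close[where u="\<lambda>n. p (Suc n)" and v=p and M=M and N=N and t=t and n=n,
          OF gp gp _ _ c M(1)] M(2) t by (auto simp: p_def)
    also have "\<dots> \<le> M * (L_drift * N)^n / fact n"
      using t L_drift_pos M by (intro divide_right_mono mult_left_mono power_mono) auto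
    finally show ?thesis unfolding d_def .
  qed
  have sm: "summable (\<lambda>n. M * (L_drift * N)^n / fact n)"
    using summable_mult[OF summable_exp[of "L_drift * N"], of M] by (simp add: field_simps)
  have W: "uniform_limit {0..N} (\<lambda>n t. \<Sum>i<n. d i t) (\<lambda>t. \<Sum>i. d i t) sequentially"
    by (rule Weierstrass_m_test[OF _ sm]) (use bd in auto)
  show ?thesis
    unfolding uniform_limit_iff
  proof (intro allI impI)
    fix e :: real assume e: "e > 0"
    have "\<forall>\<^sub>F n in sequentially. \<forall>t\<in>{0..N}. dist (\<Sum>i<n. d i t) (\<Sum>i. d i t) < e"
      using W e unfolding uniform_limit_iff by blast
    then show "\<forall>\<^sub>F n in sequentially. \<forall>t\<in>{0..N}. dist (picard_iter g x0 c n t) (picard_limit g x0 c t) < e"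
      by eventually_elim (auto simp: partial_sums[unfolded p_def] picard_limit_def d_def p_def dist_real_def)
  qed
qed

lemma picard_limit_path:
  assumes g: "inL2 T g" and c: "loc_int c"
  shows "is_path g (picard_limit g x0 c)"
proof -
  have "continuous_on {0..} (picard_limit g x0 c)"
  proof (rule continuous_on_atLeast_0_from_Icc)
    fix N :: real assume N: "N \<ge> 0"
    have "continuous_on {0..N} (picard_iter g x0 c n)" for n
      using picard_iter_path[OF g c, of x0 n] unfolding is_path_def
      by (rule continuous_on_subset[OF conjunct2[OF conjunct2]]) auto
    then show "continuous_on {0..N} (picard_limit g x0 c)"
      by (intro uniform_limit_theorem[OF _ picard_iter_uniform_limit[OF g c N]]) auto
  qed
  then show ?thesis using g unfolding is_path_def picard_limit_def by auto
qed

lemma picard_tendsto_uniform: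
  assumes gp: "\<And>n. is_path g (p n)" and gX: "is_path g X" and c: "loc_int c" and t: "t \<ge> 0"
    and ul: "uniform_limit {0..t} p X sequentially"
  shows "(\<lambda>n. picard g x0 c (p n) t) \<longlonglongrightarrow> picard g x0 c X t"
proof (rule tendstoI)
  fix e :: real assume e: "e > 0"
  define e' where "e' = e / (L_drift * (t + 1))"
  have e': "e' > 0" unfolding e'_def using e L_drift_pos t by auto
  have "\<forall>\<^sub>F n in sequentially. \<forall>s\<in>{0..t}. dist (p n s) (X s) < e'"
    using ul e' unfolding uniform_limit_iff by blast
  then show "\<forall>\<^sub>F n in sequentially. dist (picard g x0 c (p n) t) (picard g x0 c X t) < e"
  proof eventually_elim
    case (elim n)
    have "\<bar>picard g x0 c (p n) t - picard g x0 c X t\<bar> \<le> (\<integral>s\<in>{0..t}. L_drift * e' \<partial>lborel)"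
      by (rule picard_step_bound[OF gp gX c t _ set_integrable_const_Icc])
        (use elim in \<open>auto simp: dist_real_def intro: less_imp_le\<close>)
    also have "\<dots> = t * (L_drift * e')" using t by (simp add: set_integral_const)
    also have "\<dots> = e * (t / (t + 1))"
    proof -
      have "L_drift + t * L_drift > 0" using L_drift_pos t by (simp add: add_pos_nonneg)
      then show ?thesis using L_drift_pos t unfolding e'_def by (simp add: field_split_simps)
    qed
    also have "\<dots> < e" using e t by (simp add: field_simps)
    finally show ?case by (simp add: dist_real_def)
  qed
qed

lemma picard_limit_fixpoint:
  assumes g: "inL2 T g" and c: "loc_int c"
  shows "picard_limit g x0 c = picard g x0 c (picard_limit g x0 c)"
proof
  fix t
  define X where "X = picard_limit g x0 c"
  define p where "p = picard_iter g x0 c"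
  show "X t = picard g x0 c X t"
  proof (cases "t < 0")
    case True then show ?thesis by (simp add: X_def picard_limit_def picard_def)
  next
    case False
    then have t: "t \<ge> 0" by simp
    have ul: "uniform_limit {0..t} p X sequentially"
      unfolding p_def X_def using picard_iter_uniform_limit[OF g c t] .
    have "(\<lambda>n. p (Suc n) t) \<longlonglongrightarrow> X t"
      using tendsto_uniform_limitI[OF ul, of t] t by (intro LIMSEQ_Suc) auto
    moreover have "(\<lambda>n. p (Suc n) t) \<longlonglongrightarrow> picard g x0 c X t"
      using picard_tendsto_uniform[OF picard_iter_path[OF g c] picard_limit_path[OF g c] c t ul[unfolded p_def X_def]]
      unfolding p_def X_def by simp
    ultimately show ?thesis by (rule LIMSEQ_unique)
  qed
qed

lemma is_state_iff_picard_fixpoint: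
  assumes g: "inL2 T (snd \<eta>)" and c: "loc_int c"
  shows "is_state T r a f0 \<eta> c x \<longleftrightarrow> is_path (snd \<eta>) x \<and> x = picard (snd \<eta>) (fst \<eta>) c x"
proof
  assume st: "is_state T r a f0 \<eta> c x"
  then have gx: "is_path (snd \<eta>) x" using g unfolding is_state_def is_path_def by auto
  have "x t = picard (snd \<eta>) (fst \<eta>) c x t" for t
    using st unfolding is_state_def picard_def drift_def delay_int_def by (cases "t < 0") auto
  then show "is_path (snd \<eta>) x \<and> x = picard (snd \<eta>) (fst \<eta>) c x" using gx by auto
next
  assume h: "is_path (snd \<eta>) x \<and> x = picard (snd \<eta>) (fst \<eta>) c x"
  then have gx: "is_path (snd \<eta>) x" and fx: "x = picard (snd \<eta>) (fst \<eta>) c x" by auto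
  have i: "set_integrable lborel {0..t} (drift x c)" if "t \<ge> 0" for t
    using drift_integrable[OF gx that] c that unfolding loc_int_def by auto
  have e: "x t = fst \<eta> + (\<integral>s\<in>{0..t}. drift x c s \<partial>lborel)" if "t \<ge> 0" for t
    using fun_cong[OF fx, of t] that unfolding picard_def by auto
  show "is_state T r a f0 \<eta> c x"
    unfolding is_state_def
    using gx delay_int_integrable[OF gx] i e unfolding is_path_def drift_def delay_int_def by auto
qed

lemma state_unique_existence:
  assumes g: "inL2 T (snd \<eta>)" and c: "loc_int c"
  shows "\<exists>!x. is_state T r a f0 \<eta> c x"
  using picard_limit_path[OF g c] picard_limit_fixpoint[OF g c] picard_fixpoint_unique[OF _ _ c]
  unfolding is_state_iff_picard_fixpoint[OF g c] by blast

lemma state_eqI: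
  assumes "inL2 T (snd \<eta>)" "loc_int c" "is_state T r a f0 \<eta> c x"
  shows "state T r a f0 \<eta> c = x"
proof -
  have "is_state T r a f0 \<eta> c (state T r a f0 \<eta> c)"
    unfolding state_def by (rule theI'[OF state_unique_existence[OF assms(1,2)]])
  then show ?thesis using state_unique_existence[OF assms(1,2)] assms(3) by blast
qed

lemma state_is_path_fixpoint:
  assumes g: "inL2 T (snd \<eta>)" and c: "loc_int c"
  shows "is_path (snd \<eta>) (state T r a f0 \<eta> c)"
    and "state T r a f0 \<eta> c = picard (snd \<eta>) (fst \<eta>) c (state T r a f0 \<eta> c)"
proof -
  have "is_state T r a f0 \<eta> c (state T r a f0 \<eta> c)"
    unfolding state_def by (rule theI'[OF state_unique_existence[OF g c]])
  then show "is_path (snd \<eta>) (state T r a f0 \<eta> c)"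
    and "state T r a f0 \<eta> c = picard (snd \<eta>) (fst \<eta>) c (state T r a f0 \<eta> c)"
    unfolding is_state_iff_picard_fixpoint[OF g c] by auto
qed

end

lemma triangle_kernel_measurable:
  fixes \<phi> b :: "real \<Rightarrow> real"
  assumes \<phi>i: "integrable lborel \<phi>" and bi: "integrable lborel b"
  shows "(\<lambda>p. \<phi> (fst p) * (indicator {..fst p} (snd p) * b (snd p))) \<in> borel_measurable (lborel \<Otimes>\<^sub>M lborel)"
proof -
  have fst: "(\<lambda>p::real\<times>real. fst p) \<in> borel_measurable borel"
    and snd: "(\<lambda>p::real\<times>real. snd p) \<in> borel_measurable borel"
    by (intro borel_measurable_continuous_onI continuous_intros)+
  have \<phi>m: "\<phi> \<in> borel_measurable borel" and bm: "b \<in> borel_measurable borel"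
    using borel_measurable_integrable[OF \<phi>i] borel_measurable_integrable[OF bi] by simp_all
  have "closed {p::real\<times>real. snd p \<le> fst p}" by (intro closed_Collect_le continuous_intros)
  then have "(\<lambda>p::real\<times>real. indicator {p. snd p \<le> fst p} p :: real) \<in> borel_measurable borel"
    by (intro borel_measurable_indicator) auto
  then have "(\<lambda>p::real\<times>real. \<phi> (fst p) * (indicator {p. snd p \<le> fst p} p * b (snd p))) \<in> borel_measurable borel"
    using measurable_compose[OF fst \<phi>m] measurable_compose[OF snd bm]
    by (intro borel_measurable_times) (auto simp: comp_def)
  moreover have "(\<lambda>p::real\<times>real. \<phi> (fst p) * (indicator {p. snd p \<le> fst p} p * b (snd p))) =
      (\<lambda>p. \<phi> (fst p) * (indicator {..fst p} (snd p) * b (snd p)))"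
    by (auto simp: fun_eq_iff split: split_indicator)
  ultimately show ?thesis unfolding lborel_prod by simp
qed

lemma integral_triangle_swap:
  fixes \<phi> b :: "real \<Rightarrow> real"
  assumes \<phi>i: "integrable lborel \<phi>" and bi: "integrable lborel b"
  shows "(\<integral>\<xi>. \<phi> \<xi> * (\<integral>w. indicator {..\<xi>} w * b w \<partial>lborel) \<partial>lborel) =
         (\<integral>w. b w * (\<integral>\<xi>. indicator {w..} \<xi> * \<phi> \<xi> \<partial>lborel) \<partial>lborel)"
proof -
  define f where "f \<xi> w = \<phi> \<xi> * (indicator {..\<xi>} w * b w)" for \<xi> w
  have fm: "(\<lambda>p. f (fst p) (snd p)) \<in> borel_measurable (lborel \<Otimes>\<^sub>M lborel)"
    unfolding f_def by (rule triangle_kernel_measurable[OF \<phi>i bi])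
  have "integrable lborel (\<lambda>\<xi>. \<integral>w. norm (f \<xi> w) \<partial>lborel)"
  proof (rule Bochner_Integration.integrable_bound[of _ "\<lambda>\<xi>. \<bar>\<phi> \<xi>\<bar> * (\<integral>w. \<bar>b w\<bar> \<partial>lborel)"])
    show "integrable lborel (\<lambda>\<xi>. \<bar>\<phi> \<xi>\<bar> * (\<integral>w. \<bar>b w\<bar> \<partial>lborel))" using \<phi>i by auto
    have "(\<lambda>(x, y). norm (f x y)) \<in> borel_measurable (lborel \<Otimes>\<^sub>M lborel)"
      using fm by (simp add: case_prod_beta)
    then show "(\<lambda>\<xi>. \<integral>w. norm (f \<xi> w) \<partial>lborel) \<in> borel_measurable lborel"
      by (rule lborel.borel_measurable_lebesgue_integral)
    have "norm (\<integral>w. norm (f \<xi> w) \<partial>lborel) \<le> norm (\<bar>\<phi> \<xi>\<bar> * (\<integral>w. \<bar>b w\<bar> \<partial>lborel))" for \<xi>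
    proof -
      have e: "(\<integral>w. norm (f \<xi> w) \<partial>lborel) = \<bar>\<phi> \<xi>\<bar> * (\<integral>w. indicator {..\<xi>} w * \<bar>b w\<bar> \<partial>lborel)"
        unfolding f_def by (simp add: abs_mult)
      have "(\<integral>w. indicator {..\<xi>} w * \<bar>b w\<bar> \<partial>lborel) \<le> (\<integral>w. \<bar>b w\<bar> \<partial>lborel)"
        using integrable_mult_indicator[of "{..\<xi>}" lborel "\<lambda>w. \<bar>b w\<bar>"] bi
        by (intro integral_mono) (auto split: split_indicator)
      moreover have "0 \<le> (\<integral>w. indicator {..\<xi>} w * \<bar>b w\<bar> \<partial>lborel)" by simp
      ultimately show ?thesis unfolding e by (simp add: abs_mult mult_left_mono)
    qed
    then show "AE \<xi> in lborel. norm (\<integral>w. norm (f \<xi> w) \<partial>lborel) \<le> norm (\<bar>\<phi> \<xi>\<bar> * (\<integral>w. \<bar>b w\<bar> \<partial>lborel))"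
      by simp
  qed
  moreover have "AE \<xi> in lborel. integrable lborel (\<lambda>w. f \<xi> w)"
    unfolding f_def using integrable_mult_indicator[OF _ bi, of "{..\<xi>}" for \<xi>] by simp
  ultimately have fint: "integrable (lborel \<Otimes>\<^sub>M lborel) (case_prod f)"
    using lborel_pair.Fubini_integrable[OF fm] by (simp add: case_prod_beta')
  have "(\<integral>\<xi>. \<phi> \<xi> * (\<integral>w. indicator {..\<xi>} w * b w \<partial>lborel) \<partial>lborel) = (\<integral>\<xi>. (\<integral>w. f \<xi> w \<partial>lborel) \<partial>lborel)"
    unfolding f_def by simp
  also have "\<dots> = (\<integral>w. (\<integral>\<xi>. f \<xi> w \<partial>lborel) \<partial>lborel)"
    by (rule lborel_pair.Fubini_integral[OF fint, symmetric])
  also have "\<dots> = (\<integral>w. b w * (\<integral>\<xi>. indicator {w..} \<xi> * \<phi> \<xi> \<partial>lborel) \<partial>lborel)"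
  proof (rule Bochner_Integration.integral_cong[OF refl])
    fix w
    have "(\<integral>\<xi>. f \<xi> w \<partial>lborel) = (\<integral>\<xi>. b w * (indicator {w..} \<xi> * \<phi> \<xi>) \<partial>lborel)"
      unfolding f_def by (intro Bochner_Integration.integral_cong) (auto split: split_indicator)
    then show "(\<integral>\<xi>. f \<xi> w \<partial>lborel) = b w * (\<integral>\<xi>. indicator {w..} \<xi> * \<phi> \<xi> \<partial>lborel)" by simp
  qed
  finally show ?thesis .
qed

section \<open>The delay term of a history difference is controlled by the norm ||.||_{-1}\<close>

context delay_model
begin

lemma hist_diff_integrable:
  assumes "inL2 T g1" "inL2 T g2"
  shows "integrable lborel (hist (\<lambda>u. g1 u - g2 u))"
proof -
  have "hist (\<lambda>u. g1 u - g2 u) = (\<lambda>u. hist g1 u - hist g2 u)"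
    unfolding hist_def by (simp add: fun_eq_iff algebra_simps)
  then show ?thesis using hist_integrable[OF assms(1)] hist_integrable[OF assms(2)] by simp
qed

text \<open>hist_tail g1 g2 v = int_v^0 (g1 - g2) for v in [-T,0]; it is what the primitive of
  the history difference looks like in the ||.||_{-1} norm.\<close>

definition hist_tail :: "(real \<Rightarrow> real) \<Rightarrow> (real \<Rightarrow> real) \<Rightarrow> real \<Rightarrow> real" where
  "hist_tail g1 g2 v = (\<integral>u. indicator {v..} u * hist (\<lambda>u. g1 u - g2 u) u \<partial>lborel)"

lemma hist_tail_measurable:
  assumes "inL2 T g1" "inL2 T g2"
  shows "hist_tail g1 g2 \<in> borel_measurable borel"
proof -
  define d where "d = hist (\<lambda>u. g1 u - g2 u)"
  have dm: "d \<in> borel_measurable borel"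
    unfolding d_def using borel_measurable_integrable[OF hist_diff_integrable[OF assms]] by simp
  have "closed {p::real\<times>real. fst p \<le> snd p}"
    by (intro closed_Collect_le continuous_intros)
  then have m1: "(\<lambda>p::real\<times>real. indicator {p. fst p \<le> snd p} p :: real) \<in> borel_measurable borel"
    by (intro borel_measurable_indicator) auto
  have snd: "(\<lambda>p::real\<times>real. snd p) \<in> borel_measurable borel"
    by (intro borel_measurable_continuous_onI continuous_intros)
  have "(\<lambda>p::real\<times>real. indicator {p. fst p \<le> snd p} p * d (snd p)) \<in> borel_measurable borel"
    using m1 measurable_compose[OF snd dm] by (intro borel_measurable_times) (auto simp: comp_def)
  moreover have "(\<lambda>p::real\<times>real. indicator {p. fst p \<le> snd p} p * d (snd p)) = (\<lambda>(v, u). indicator {v..} u * d u)"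
    by (auto simp: fun_eq_iff split: split_indicator)
  ultimately have "(\<lambda>(v, u). indicator {v..} u * d u) \<in> borel_measurable (lborel \<Otimes>\<^sub>M lborel)"
    unfolding lborel_prod by simp
  then have "hist_tail g1 g2 \<in> borel_measurable lborel"
    unfolding hist_tail_def d_def by (rule lborel.borel_measurable_lebesgue_integral)
  then show ?thesis by simp
qed

lemma hist_tail_bound:
  assumes "inL2 T g1" "inL2 T g2"
  shows "\<bar>hist_tail g1 g2 v\<bar> \<le> (\<integral>u. \<bar>hist (\<lambda>u. g1 u - g2 u) u\<bar> \<partial>lborel)"
  unfolding hist_tail_def
proof (rule integral_abs_bound_integral)
  show "integrable lborel (\<lambda>u. indicator {v..} u * hist (\<lambda>u. g1 u - g2 u) u)"
    using integrable_mult_indicator[OF _ hist_diff_integrable[OF assms], of "{v..}"] by simp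
  show "integrable lborel (\<lambda>u. \<bar>hist (\<lambda>u. g1 u - g2 u) u\<bar>)"
    using hist_diff_integrable[OF assms] by auto
qed (auto split: split_indicator)

lemma hist_tail_nonneg_arg:
  assumes "v \<ge> 0"
  shows "hist_tail g1 g2 v = 0"
proof -
  have "(\<lambda>u. indicator {v..} u * hist (\<lambda>u. g1 u - g2 u) u) = (\<lambda>_. 0)"
    using assms unfolding hist_def by (auto simp: fun_eq_iff split: split_indicator)
  then show ?thesis unfolding hist_tail_def by simp
qed

lemma hist_tail_eq_set_integral:
  assumes g1: "inL2 T g1" and g2: "inL2 T g2" and v: "v \<in> {-T..0}"
  shows "(\<integral>u\<in>{v..0}. (g2 u - g1 u) \<partial>lborel) = - hist_tail g1 g2 v"
proof -
  define d where "d = hist (\<lambda>u. g1 u - g2 u)"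
  have dm: "d \<in> borel_measurable lborel"
    unfolding d_def using borel_measurable_integrable[OF hist_diff_integrable[OF g1 g2]] .
  have "(\<integral>u\<in>{v..0}. (g2 u - g1 u) \<partial>lborel) = - (\<integral>u. indicator {v..0} u * (g1 u - g2 u) \<partial>lborel)"
    unfolding set_lebesgue_integral_def by (simp add: algebra_simps flip: integral_minus)
  also have "(\<integral>u. indicator {v..0} u * (g1 u - g2 u) \<partial>lborel) = hist_tail g1 g2 v"
    unfolding hist_tail_def d_def[symmetric]
  proof (rule integral_cong_AE)
    show "(\<lambda>u. indicator {v..0} u * (g1 u - g2 u)) \<in> borel_measurable lborel"
    proof -
      have "(\<lambda>u. indicator {v..0} u * (g1 u - g2 u)) = (\<lambda>u. indicator {v..0} u * d u + indicator {0} u * (g1 0 - g2 0))"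
        using v unfolding d_def hist_def by (auto simp: fun_eq_iff split: split_indicator)
      then show ?thesis using dm by simp
    qed
    show "(\<lambda>u. indicator {v..} u * d u) \<in> borel_measurable lborel" using dm by simp
    show "AE u in lborel. indicator {v..0} u * (g1 u - g2 u) = indicator {v..} u * d u"
      using AE_lborel_singleton[of 0]
      by eventually_elim (use v in \<open>auto simp: d_def hist_def split: split_indicator\<close>)
  qed
  finally show ?thesis .
qed

lemma da_ext_square:
  shows "integrable lborel (\<lambda>w. (da_ext w)^2)"
    and "(\<integral>w. (da_ext w)^2 \<partial>lborel) = (\<integral>v\<in>{-T..0}. (a' v)^2 \<partial>lborel)"
proof -
  have "integrable lborel (\<lambda>w. indicator {-T..0} w *\<^sub>R (a' w)^2)"
    using a'_L2 unfolding inL2_def set_integrable_def by blast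
  then show "integrable lborel (\<lambda>w. (da_ext w)^2)" unfolding da_ext_def
    by (rule back_subst[of "integrable lborel"]) (auto simp: power2_eq_square split: split_indicator)
  show "(\<integral>w. (da_ext w)^2 \<partial>lborel) = (\<integral>v\<in>{-T..0}. (a' v)^2 \<partial>lborel)"
    unfolding set_lebesgue_integral_def da_ext_def
    by (intro Bochner_Integration.integral_cong) (auto simp: power2_eq_square split: split_indicator)
qed

lemma a_eq_integral_da_ext: "\<xi> \<in> {-T..0} \<Longrightarrow> a \<xi> = (\<integral>w. indicator {..\<xi>} w * da_ext w \<partial>lborel)"
  unfolding a_primitive set_lebesgue_integral_def da_ext_def
  by (intro Bochner_Integration.integral_cong) (auto split: split_indicator)

text \<open>Integration by parts (a(-T) = 0): the delay term of a history difference is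
  int a'(w) R(w+s) dw, where R is the tail integral of the difference.\<close>

lemma delay_hist_by_parts:
  assumes g1: "inL2 T g1" and g2: "inL2 T g2" and s: "s \<ge> 0"
  shows "(\<integral>\<xi>. a_ext \<xi> * hist (\<lambda>u. g1 u - g2 u) (s + \<xi>) \<partial>lborel) =
         (\<integral>w. da_ext w * hist_tail g1 g2 (w + s) \<partial>lborel)"
proof -
  define d where "d = hist (\<lambda>u. g1 u - g2 u)"
  have di: "integrable lborel d" unfolding d_def using hist_diff_integrable[OF g1 g2] .
  define \<phi> where "\<phi> \<xi> = indicator {-T..0} \<xi> * d (s + \<xi>)" for \<xi>
  have \<phi>i: "integrable lborel \<phi>"
  proof -
    have "integrable lborel (\<lambda>\<xi>. d (s + 1 * \<xi>))"
      by (rule lborel_integrable_real_affine[OF di]) simp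
    then have "integrable lborel (\<lambda>\<xi>. indicator {-T..0} \<xi> *\<^sub>R d (s + \<xi>))"
      by (intro integrable_mult_indicator) auto
    then show ?thesis unfolding \<phi>_def by simp
  qed
  have "(\<integral>\<xi>. a_ext \<xi> * d (s + \<xi>) \<partial>lborel) = (\<integral>\<xi>. \<phi> \<xi> * (\<integral>w. indicator {..\<xi>} w * da_ext w \<partial>lborel) \<partial>lborel)"
    unfolding a_ext_def \<phi>_def
    by (intro Bochner_Integration.integral_cong) (auto simp: a_eq_integral_da_ext split: split_indicator)
  also have "\<dots> = (\<integral>w. da_ext w * (\<integral>\<xi>. indicator {w..} \<xi> * \<phi> \<xi> \<partial>lborel) \<partial>lborel)"
    by (rule integral_triangle_swap[OF \<phi>i da_ext_integrable])
  also have "\<dots> = (\<integral>w. da_ext w * hist_tail g1 g2 (w + s) \<partial>lborel)"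
  proof (rule Bochner_Integration.integral_cong[OF refl])
    fix w :: real
    show "da_ext w * (\<integral>\<xi>. indicator {w..} \<xi> * \<phi> \<xi> \<partial>lborel) = da_ext w * hist_tail g1 g2 (w + s)"
    proof (cases "w \<in> {-T..0}")
      case False
      then show ?thesis unfolding da_ext_def by simp
    next
      case True
      define k where "k u = indicator {w..} (u - s) * (indicator {-T..0} (u - s) * d u)" for u
      have "(\<integral>\<xi>. indicator {w..} \<xi> * \<phi> \<xi> \<partial>lborel) = (\<integral>\<xi>. k (s + 1 * \<xi>) \<partial>lborel)"
        unfolding k_def \<phi>_def by simp
      also have "\<dots> = (\<integral>u. k u \<partial>lborel)"
        using lborel_integral_real_affine[of 1 k s] by simp
      also have "\<dots> = hist_tail g1 g2 (w + s)"
        unfolding hist_tail_def k_def d_def hist_def using True s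
        by (intro Bochner_Integration.integral_cong) (auto split: split_indicator)
      finally show ?thesis by simp
    qed
  qed
  finally show ?thesis unfolding d_def .
qed

lemma hist_tail_shift_sq_integrable:
  assumes g1: "inL2 T g1" and g2: "inL2 T g2"
  shows "set_integrable lborel {-T..0} (\<lambda>v. (k + hist_tail g1 g2 v)^2)"
proof -
  define B where "B = (\<integral>u. \<bar>hist (\<lambda>u. g1 u - g2 u) u\<bar> \<partial>lborel)"
  show ?thesis
  proof (rule set_integrable_bound[OF set_integrable_const_Icc[of "-T" 0 "(\<bar>k\<bar> + B)^2"]])
    have "(\<lambda>v. (k + hist_tail g1 g2 v)^2) \<in> borel_measurable borel"
      using hist_tail_measurable[OF g1 g2] by measurable
    then show "set_borel_measurable lborel {-T..0} (\<lambda>v. (k + hist_tail g1 g2 v)^2)"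
      unfolding set_borel_measurable_def by simp
    have "\<bar>k + hist_tail g1 g2 v\<bar> \<le> \<bar>k\<bar> + B" for v
      using hist_tail_bound[OF g1 g2, of v] unfolding B_def by linarith
    then have "(k + hist_tail g1 g2 v)^2 \<le> (\<bar>k\<bar> + B)^2" for v
      by (metis abs_le_square_iff abs_of_nonneg abs_ge_zero order_trans)
    then show "AE v in lborel. v \<in> {-T..0} \<longrightarrow> norm ((k + hist_tail g1 g2 v)^2) \<le> norm ((\<bar>k\<bar> + B)^2)"
      by (intro AE_I2) auto
  qed
qed

lemma norm_m1_eq:
  "norm_m1 T r (Hminus \<zeta> \<eta>) =
     sqrt ((fst \<zeta> / r - fst \<eta> / r)^2 + (\<integral>v\<in>{-T..0}. (fst \<zeta> / r - fst \<eta> / r + hist_tail (snd \<eta>) (snd \<zeta>) v)^2 \<partial>lborel))"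
  if "inL2 T (snd \<eta>)" "inL2 T (snd \<zeta>)"
  unfolding norm_m1_def Hminus_def
  by (auto simp: diff_divide_distrib hist_tail_eq_set_integral[OF that] intro!: arg_cong[where f=sqrt] set_lebesgue_integral_cong)

lemma norm_m1_fst_bound:
  assumes "norm_m1 T r (Hminus \<zeta> \<eta>) < \<epsilon>"
  shows "\<bar>fst \<eta> - fst \<zeta>\<bar> \<le> r * \<epsilon>"
proof -
  define I where "I = (\<integral>v\<in>{-T..0}. ((fst \<zeta> - fst \<eta>)/r - (\<integral>u\<in>{v..0}. (snd \<zeta> u - snd \<eta> u) \<partial>lborel))^2 \<partial>lborel)"
  have "I \<ge> 0" unfolding I_def set_lebesgue_integral_def by simp
  then have "\<bar>(fst \<zeta> - fst \<eta>) / r\<bar> \<le> norm_m1 T r (Hminus \<zeta> \<eta>)"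
    unfolding norm_m1_def Hminus_def I_def[symmetric] fst_conv snd_conv
    using real_sqrt_le_mono[of "((fst \<zeta> - fst \<eta>)/r)^2" "((fst \<zeta> - fst \<eta>)/r)^2 + I"] by simp
  then have "\<bar>fst \<eta> - fst \<zeta>\<bar> \<le> r * norm_m1 T r (Hminus \<zeta> \<eta>)"
    using r_pos by (simp add: field_simps abs_minus_commute)
  also have "\<dots> \<le> r * \<epsilon>" using assms r_pos by simp
  finally show ?thesis .
qed

lemma hist_tail_L2_bound:
  assumes g1: "inL2 T g1" and g2: "inL2 T g2"
    and small: "sqrt (k^2 + (\<integral>v\<in>{-T..0}. (k + hist_tail g1 g2 v)^2 \<partial>lborel)) < \<epsilon>"
  shows "(\<integral>v\<in>{-T..0}. (hist_tail g1 g2 v)^2 \<partial>lborel) \<le> 2 * (1 + T) * \<epsilon>^2"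
proof -
  define R where "R = hist_tail g1 g2"
  define I where "I = (\<integral>v\<in>{-T..0}. (k + R v)^2 \<partial>lborel)"
  have I0: "I \<ge> 0" unfolding I_def set_lebesgue_integral_def by simp
  have "sqrt (k^2 + I) < \<epsilon>" using small unfolding I_def R_def .
  then have "(sqrt (k^2 + I))^2 < \<epsilon>^2" using I0 by (intro power_strict_mono) auto
  then have N2e: "k^2 + I < \<epsilon>^2" using I0 by simp
  have iR: "set_integrable lborel {-T..0} (\<lambda>v. (R v)^2)"
    using hist_tail_shift_sq_integrable[OF g1 g2, of 0] unfolding R_def by simp
  have ikR: "set_integrable lborel {-T..0} (\<lambda>v. (k + R v)^2)"
    using hist_tail_shift_sq_integrable[OF g1 g2, of k] unfolding R_def by simp
  have "(\<integral>v\<in>{-T..0}. (R v)^2 \<partial>lborel) \<le> (\<integral>v\<in>{-T..0}. 2 * (k + R v)^2 + 2 * k^2 \<partial>lborel)"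
  proof (rule set_integral_mono[OF iR])
    show "set_integrable lborel {-T..0} (\<lambda>v. 2 * (k + R v)^2 + 2 * k^2)"
      using ikR set_integrable_const_Icc by auto
    fix v :: real
    have "0 \<le> (k + R v + k)^2" by simp
    then show "(R v)^2 \<le> 2 * (k + R v)^2 + 2 * k^2"
      by (simp add: power2_eq_square algebra_simps)
  qed
  also have "\<dots> = 2 * I + T * (2 * k^2)"
    using ikR set_integrable_const_Icc T_pos unfolding I_def by (simp add: set_integral_const)
  also have "\<dots> \<le> 2 * (1 + T) * (k^2 + I)"
    using T_pos I0 by (simp add: algebra_simps)
  also have "\<dots> \<le> 2 * (1 + T) * \<epsilon>^2"
    using N2e T_pos by (intro mult_left_mono) auto
  finally show ?thesis unfolding R_def .
qed

definition K_hist :: real where "K_hist = (\<integral>v\<in>{-T..0}. (a' v)^2 \<partial>lborel) / 2 + 1 + T"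

lemma K_hist_pos: "K_hist > 0"
proof -
  have "(\<integral>v\<in>{-T..0}. (a' v)^2 \<partial>lborel) \<ge> 0" unfolding set_lebesgue_integral_def by simp
  then show ?thesis unfolding K_hist_def using T_pos by simp
qed

text \<open>By parts and Young's inequality it is bounded by
  eps/2 ||a'||^2 + 1/(2 eps) ||R||^2, and ||R||^2 <= 2(1+T) eps^2.\<close>

lemma delay_hist_bound:
  assumes g1: "inL2 T (snd \<eta>)" and g2: "inL2 T (snd \<zeta>)" and e: "\<epsilon> > 0" and s: "s \<in> {0..T}"
    and nrm: "norm_m1 T r (Hminus \<zeta> \<eta>) < \<epsilon>"
  shows "\<bar>\<integral>\<xi>. a_ext \<xi> * hist (\<lambda>u. snd \<eta> u - snd \<zeta> u) (s + \<xi>) \<partial>lborel\<bar> \<le> K_hist * \<epsilon>"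
proof -
  define R where "R = hist_tail (snd \<eta>) (snd \<zeta>)"
  define JR where "JR = (\<integral>v\<in>{-T..0}. (R v)^2 \<partial>lborel)"
  have JRb: "JR \<le> 2 * (1 + T) * \<epsilon>^2"
    unfolding JR_def R_def
    by (rule hist_tail_L2_bound[OF g1 g2]) (use nrm in \<open>simp add: norm_m1_eq[OF g1 g2]\<close>)
  have Rm: "(\<lambda>w. R (w + s)) \<in> borel_measurable borel"
    using hist_tail_measurable[OF g1 g2] unfolding R_def by measurable
  have dam: "da_ext \<in> borel_measurable borel"
    using borel_measurable_integrable[OF da_ext_integrable] by simp
  note da2 = da_ext_square(1) and da2_eq = da_ext_square(2)
  have iRs: "integrable lborel (\<lambda>w. indicator {-T..0} (s + 1 * w) * (R (s + 1 * w))^2)"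
    using hist_tail_shift_sq_integrable[OF g1 g2, of 0] unfolding set_integrable_def R_def
    by (intro lborel_integrable_real_affine) auto
  have i2: "integrable lborel (\<lambda>w. \<epsilon> / 2 * (da_ext w)^2 + 1 / (2 * \<epsilon>) * (indicator {-T..0} (w + s) * (R (w + s))^2))"
    using da2 iRs by (simp add: add.commute)
  have young: "\<bar>da_ext w * R (w + s)\<bar> \<le> \<epsilon> / 2 * (da_ext w)^2 + 1 / (2 * \<epsilon>) * (indicator {-T..0} (w + s) * (R (w + s))^2)" for w
  proof (cases "w \<in> {-T..0} \<and> w + s < 0")
    case True
    then have "indicator {-T..0} (w + s) = (1::real)" using s by auto
    then show ?thesis using abs_mult_le_weighted_squares[OF e, of "da_ext w" "R (w + s)"] by simp
  next
    case False
    then have "da_ext w * R (w + s) = 0"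
      unfolding da_ext_def R_def using hist_tail_nonneg_arg[of "w + s"] by auto
    moreover have "0 \<le> \<epsilon> / 2 * (da_ext w)^2 + 1 / (2 * \<epsilon>) * (indicator {-T..0} (w + s) * (R (w + s))^2)"
      using e by (intro add_nonneg_nonneg mult_nonneg_nonneg) auto
    ultimately show ?thesis by (metis abs_zero)
  qed
  have i1: "integrable lborel (\<lambda>w. da_ext w * R (w + s))"
    using young dam Rm
    by (intro Bochner_Integration.integrable_bound[OF i2]) (auto intro: order_trans[OF _ abs_ge_self])
  have "\<bar>\<integral>w. da_ext w * R (w + s) \<partial>lborel\<bar> \<le>
        (\<integral>w. \<epsilon> / 2 * (da_ext w)^2 + 1 / (2 * \<epsilon>) * (indicator {-T..0} (w + s) * (R (w + s))^2) \<partial>lborel)"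
    using young by (rule integral_abs_bound_integral[OF i1 i2])
  also have "\<dots> = \<epsilon> / 2 * (\<integral>v\<in>{-T..0}. (a' v)^2 \<partial>lborel) + 1 / (2 * \<epsilon>) * JR"
    using da2 iRs da2_eq lborel_integral_real_affine[of 1 "\<lambda>v. indicator {-T..0} v * (R v)^2" s]
    unfolding JR_def set_lebesgue_integral_def by (simp add: add.commute)
  also have "\<dots> \<le> \<epsilon> / 2 * (\<integral>v\<in>{-T..0}. (a' v)^2 \<partial>lborel) + 1 / (2 * \<epsilon>) * (2 * (1 + T) * \<epsilon>^2)"
    using JRb e by (intro add_left_mono mult_left_mono) auto
  also have "\<dots> = K_hist * \<epsilon>"
    unfolding K_hist_def using e by (simp add: field_simps power2_eq_square)
  finally show ?thesis
    unfolding R_def delay_hist_by_parts[OF g1 g2 conjunct1[OF s[unfolded atLeastAtMost_iff]]] .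
qed

end

section \<open>Steering the state of a nearby initial datum\<close>

locale steering = delay_model +
  fixes g_eta g_zeta c_eta x_eta :: "real \<Rightarrow> real" and x0_eta x0_zeta m D :: real
  assumes g_eta: "inL2 T g_eta" and g_zeta: "inL2 T g_zeta"
    and c_eta_int: "loc_int c_eta" and c_eta_nn: "\<And>t. t \<ge> 0 \<Longrightarrow> c_eta t \<ge> 0"
    and x_eta_path: "is_path g_eta x_eta" and x_eta_fix: "x_eta = picard g_eta x0_eta c_eta x_eta"
    and m_pos: "m > 0" and x_eta_ge_m: "\<And>t. t \<in> {0..T} \<Longrightarrow> x_eta t \<ge> m"
    and D: "\<And>s. s \<in> {0..T} \<Longrightarrow> \<bar>\<integral>\<xi>. a_ext \<xi> * hist (\<lambda>u. g_eta u - g_zeta u) (s + \<xi>) \<partial>lborel\<bar> \<le> D"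
    and small: "\<bar>x0_eta - x0_zeta\<bar> + (L_drift * \<bar>x0_eta - x0_zeta\<bar> + C * D) * exp ((L_drift + 1) * T) \<le> m / 2"
begin

text \<open>The correction phi(t) = phi0 + gamma (e^{(L+1)t} - 1) starts at the difference of initial values
  and grows fast enough to dominate the drift discrepancy it causes (L = L_drift).\<close>

definition gamma :: real where "gamma = L_drift * \<bar>x0_eta - x0_zeta\<bar> + C * D"

definition correction :: "real \<Rightarrow> real" where
  "correction t = (x0_eta - x0_zeta) + gamma * (exp ((L_drift + 1) * t) - 1)"

definition correction' :: "real \<Rightarrow> real" where
  "correction' t = gamma * (L_drift + 1) * exp ((L_drift + 1) * t)"

definition steered :: "real \<Rightarrow> real" where
  "steered t = (if t < 0 then g_zeta t else if t \<le> T then x_eta t - correction t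
                else (x_eta T - correction T) * exp (- C * (t - T)))"

definition steered_drift :: "real \<Rightarrow> real" where
  "steered_drift s = (if s \<le> T then drift x_eta c_eta s - correction' s else - C * steered s)"

definition steered_control :: "real \<Rightarrow> real" where
  "steered_control s = r * steered s + f0 (steered s) (delay_int steered s) - steered_drift s"

lemma D_nn: "D \<ge> 0"
  using D[of 0] T_pos by (meson abs_ge_zero atLeastAtMost_iff less_eq_real_def order_trans)

lemma gamma_nn: "gamma \<ge> 0"
  unfolding gamma_def using L_drift_pos C_nn D_nn by simp

lemma correction_deriv: "(correction has_real_derivative correction' t) (at t)"
  unfolding correction_def correction'_def by (auto intro!: derivative_eq_intros)

lemma correction_bound:
  assumes "0 \<le> u" "u \<le> s"
  shows "\<bar>correction u\<bar> \<le> \<bar>x0_eta - x0_zeta\<bar> + gamma * (exp ((L_drift + 1) * s) - 1)"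
proof -
  have "1 \<le> exp ((L_drift + 1) * u)" "exp ((L_drift + 1) * u) \<le> exp ((L_drift + 1) * s)"
    using assms L_drift_pos by auto
  then have "0 \<le> gamma * (exp ((L_drift + 1) * u) - 1)"
    "gamma * (exp ((L_drift + 1) * u) - 1) \<le> gamma * (exp ((L_drift + 1) * s) - 1)"
    using gamma_nn by (auto intro: mult_left_mono)
  then show ?thesis unfolding correction_def by linarith
qed

lemma steered_ge_half_m:
  assumes t: "t \<in> {0..T}"
  shows "steered t \<ge> m / 2"
proof -
  have "\<bar>correction t\<bar> \<le> \<bar>x0_eta - x0_zeta\<bar> + gamma * (exp ((L_drift + 1) * T) - 1)"
    using correction_bound[of t T] t by auto
  also have "\<dots> \<le> \<bar>x0_eta - x0_zeta\<bar> + gamma * exp ((L_drift + 1) * T)" using gamma_nn by (simp add: algebra_simps)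
  also have "\<dots> \<le> m / 2" using small unfolding gamma_def by simp
  finally show ?thesis using x_eta_ge_m[OF t] t unfolding steered_def by auto
qed

lemma steered_tail: "t \<ge> T \<Longrightarrow> steered t = steered T * exp (- C * (t - T))"
  using T_pos unfolding steered_def by (cases "t = T") auto

lemma steered_pos: "t \<ge> 0 \<Longrightarrow> steered t > 0"
  using steered_ge_half_m[of t] steered_ge_half_m[of T] steered_tail[of t] m_pos T_pos
  by (cases "t \<le> T") (auto intro: mult_pos_pos)

lemma steered_path: "is_path g_zeta steered"
proof -
  have "continuous_on {0..T} x_eta"
    using x_eta_path unfolding is_path_def by (rule continuous_on_subset[OF conjunct2[OF conjunct2]]) auto
  moreover have "continuous_on {0..T} correction" unfolding correction_def by (intro continuous_intros)
  ultimately have "continuous_on {0..T} (\<lambda>t. x_eta t - correction t)" by (rule continuous_on_diff)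
  then have c1: "continuous_on {0..T} steered"
    by (rule continuous_on_cong[THEN iffD1, OF refl, rotated]) (auto simp: steered_def)
  have "continuous_on {T..} (\<lambda>t. steered T * exp (- C * (t - T)))"
    by (intro continuous_intros)
  then have c2: "continuous_on {T..} steered"
    by (rule continuous_on_cong[THEN iffD1, OF refl, rotated]) (metis atLeast_iff steered_tail)
  have "{0..T} \<union> {T..} = {0::real..}" using T_pos by auto
  then have "continuous_on {0..} steered"
    using continuous_on_closed_Un[OF _ _ c1 c2] by auto
  then show ?thesis using g_zeta unfolding is_path_def steered_def by auto
qed

lemma x_eta_integral_eq: "t \<ge> 0 \<Longrightarrow> x_eta t = x0_eta + (\<integral>s\<in>{0..t}. drift x_eta c_eta s \<partial>lborel)"
  using fun_cong[OF x_eta_fix, of t] unfolding picard_def by auto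

lemma drift_x_eta_integrable: "t \<ge> 0 \<Longrightarrow> set_integrable lborel {0..t} (drift x_eta c_eta)"
  using drift_integrable[OF x_eta_path] c_eta_int unfolding loc_int_def by auto

lemma correction'_integrable: "set_integrable lborel {0..t} correction'"
proof -
  have "continuous_on {0..t} correction'" unfolding correction'_def by (intro continuous_intros)
  then show ?thesis unfolding set_integrable_def by (intro borel_integrable_compact) auto
qed

lemma steered_drift_integrable:
  assumes t: "t \<ge> 0"
  shows "set_integrable lborel {0..t} steered_drift"
proof -
  note i1 = correction'_integrable[of t]
  have "continuous_on {0..t} steered"
    using steered_path unfolding is_path_def by (rule continuous_on_subset[OF conjunct2[OF conjunct2]]) auto
  then have "continuous_on {0..t} (\<lambda>s. - C * steered s)" by (intro continuous_on_mult continuous_on_const)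
  then have i2: "set_integrable lborel {0..t} (\<lambda>s. - C * steered s)"
    unfolding set_integrable_def by (intro borel_integrable_compact) auto
  have "set_integrable lborel {0..t}
          (\<lambda>s. indicator {..T} s * (drift x_eta c_eta s - correction' s) + indicator {T<..} s * (- C * steered s))"
    using drift_x_eta_integrable[OF t] i1 i2
    by (intro set_integral_add(1) set_integrable_indicator_mult set_integral_diff(1)) auto
  moreover have "(\<lambda>s. indicator {..T} s * (drift x_eta c_eta s - correction' s) + indicator {T<..} s * (- C * steered s))
      = steered_drift"
    unfolding steered_drift_def by (auto simp: fun_eq_iff split: split_indicator)
  ultimately show ?thesis by simp
qed

lemma steered_control_loc_int: "loc_int steered_control"
  unfolding loc_int_def
proof (intro allI impI)
  fix t :: real assume t: "t \<ge> 0"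
  have "set_integrable lborel {0..t} (drift steered (\<lambda>_. 0))"
    using drift_integrable[OF steered_path t set_integrable_const_Icc] .
  then have "set_integrable lborel {0..t} (\<lambda>s. drift steered (\<lambda>_. 0) s - steered_drift s)"
    using steered_drift_integrable[OF t] by (intro set_integral_diff(1))
  moreover have "(\<lambda>s. drift steered (\<lambda>_. 0) s - steered_drift s) = steered_control"
    unfolding drift_def steered_control_def by auto
  ultimately show "set_integrable lborel {0..t} steered_control" by simp
qed

lemma steered_integral_eq_Icc:
  assumes t: "t \<in> {0..T}"
  shows "steered t = x0_zeta + (\<integral>s\<in>{0..t}. steered_drift s \<partial>lborel)"
proof -
  have "(\<integral>s\<in>{0..t}. steered_drift s \<partial>lborel) = (\<integral>s\<in>{0..t}. drift x_eta c_eta s - correction' s \<partial>lborel)"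
    using t unfolding steered_drift_def by (intro set_lebesgue_integral_cong) auto
  also have "\<dots> = (\<integral>s\<in>{0..t}. drift x_eta c_eta s \<partial>lborel) - (\<integral>s\<in>{0..t}. correction' s \<partial>lborel)"
    using drift_x_eta_integrable[of t] t correction'_integrable by (intro set_integral_diff(2)) auto
  also have "(\<integral>s\<in>{0..t}. correction' s \<partial>lborel) = correction t - correction 0"
    using t correction_deriv by (intro set_integral_FTC_Icc) (auto simp: correction'_def intro!: continuous_intros)
  also have "(\<integral>s\<in>{0..t}. drift x_eta c_eta s \<partial>lborel) = x_eta t - x0_eta"
    using x_eta_integral_eq[of t] t by auto
  finally show ?thesis using t unfolding steered_def correction_def by auto
qed

lemma steered_integral_eq:
  assumes t: "t \<ge> 0"
  shows "steered t = x0_zeta + (\<integral>s\<in>{0..t}. steered_drift s \<partial>lborel)"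
proof (cases "t \<le> T")
  case True then show ?thesis using steered_integral_eq_Icc t by auto
next
  case False
  have "(\<integral>s\<in>{0..t}. steered_drift s \<partial>lborel) = (\<integral>s\<in>{0..T}. steered_drift s \<partial>lborel) + (\<integral>s\<in>{T<..t}. steered_drift s \<partial>lborel)"
    using steered_drift_integrable[OF t] False T_pos by (intro set_integral_split_Icc) auto
  also have "(\<integral>s\<in>{0..T}. steered_drift s \<partial>lborel) = steered T - x0_zeta"
    using steered_integral_eq_Icc[of T] T_pos by auto
  also have "(\<integral>s\<in>{T<..t}. steered_drift s \<partial>lborel) = (\<integral>s\<in>{T<..t}. - C * (steered T * exp (- C * (s - T))) \<partial>lborel)"
  proof (intro set_lebesgue_integral_cong allI impI)
    fix u assume "u \<in> {T<..t}"
    then show "steered_drift u = - C * (steered T * exp (- C * (u - T)))"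
      using steered_tail[of u] unfolding steered_drift_def by simp
  qed auto
  also have "\<dots> = steered T * exp (- C * (t - T)) - steered T * exp (- C * (T - T))"
    using False by (intro set_integral_FTC_Ioc) (auto intro!: continuous_intros derivative_eq_intros)
  finally show ?thesis using steered_tail[of t] False by simp
qed

lemma steered_fixpoint: "steered = picard g_zeta x0_zeta steered_control steered"
proof
  fix t
  have "drift steered steered_control = steered_drift"
    unfolding drift_def steered_control_def by auto
  then show "steered t = picard g_zeta x0_zeta steered_control steered t"
    unfolding picard_def using steered_integral_eq[of t] by (auto simp: steered_def)
qed

text \<open>On [0,T] the delay terms along x_eta and along the steered path differ by the trajectory
  error (at most the correction, via delay_int_diff) plus the history error (bounded by D).  The
  intermediate path w has the history of eta and the trajectory of the steered path.\<close>

lemma steered_delay_error: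
  assumes s0: "s \<ge> 0" and sT: "s \<le> T"
  shows "\<bar>delay_int x_eta s - delay_int steered s\<bar>
           \<le> a_max * T * (\<bar>x0_eta - x0_zeta\<bar> + gamma * (exp ((L_drift + 1) * s) - 1)) + D"
proof -
  define \<beta> where "\<beta> = \<bar>x0_eta - x0_zeta\<bar> + gamma * (exp ((L_drift + 1) * s) - 1)"
  define w where "w t = (if t < 0 then g_eta t else steered t)" for t
  have w_path: "is_path g_eta w"
  proof -
    have "continuous_on {0..} w"
      using steered_path unfolding is_path_def
      by (rule continuous_on_cong[THEN iffD1, OF refl, rotated, OF conjunct2[OF conjunct2]]) (auto simp: w_def)
    then show ?thesis using g_eta unfolding is_path_def w_def by auto
  qed
  have traj_err: "\<bar>delay_int x_eta s - delay_int w s\<bar> \<le> a_max * T * \<beta>"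
  proof (rule delay_int_diff[OF x_eta_path w_path s0])
    fix u assume u: "u \<in> {0..s}"
    then have "w u = x_eta u - correction u" using sT unfolding w_def steered_def by auto
    then show "\<bar>x_eta u - w u\<bar> \<le> \<beta>" unfolding \<beta>_def using correction_bound[of u s] u by auto
  qed
  have hist_err: "\<bar>delay_int w s - delay_int steered s\<bar> \<le> D"
  proof -
    have "delay_int w s - delay_int steered s =
          (\<integral>\<xi>. a_ext \<xi> * glued g_eta w (s + \<xi>) - a_ext \<xi> * glued g_zeta steered (s + \<xi>) \<partial>lborel)"
    proof -
      have ew: "\<forall>t<0. w t = g_eta t" and es: "\<forall>t<0. steered t = g_zeta t"
        by (simp_all add: w_def steered_def)
      show ?thesis
        unfolding delay_int_glued(2)[OF ew s0] delay_int_glued(2)[OF es s0]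
        by (intro Bochner_Integration.integral_diff[symmetric] integrable_a_glued w_path steered_path s0)
    qed
    also have "\<dots> = (\<integral>\<xi>. a_ext \<xi> * hist (\<lambda>u. g_eta u - g_zeta u) (s + \<xi>) \<partial>lborel)"
      unfolding glued_def hist_def traj_def w_def
      by (intro Bochner_Integration.integral_cong) (auto simp: algebra_simps split: split_indicator)
    finally show ?thesis using D[of s] sT s0 by simp
  qed
  show ?thesis using traj_err hist_err unfolding \<beta>_def by linarith
qed

text \<open>Nonnegativity of the control on [0,T]: the correction grows at least as fast as the
  discrepancy between the drift along x_eta and the drift along the steered path, which consists
  of r phi, the Lipschitz error of f0 in the state, and the delay error.\<close>

lemma steered_control_nonneg_Icc:
  assumes s0: "s \<ge> 0" and sT: "s \<le> T"
  shows "steered_control s \<ge> 0"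
proof -
  define \<beta> where "\<beta> = \<bar>x0_eta - x0_zeta\<bar> + gamma * (exp ((L_drift + 1) * s) - 1)"
  have delay_err: "\<bar>delay_int x_eta s - delay_int steered s\<bar> \<le> a_max * T * \<beta> + D"
    unfolding \<beta>_def using steered_delay_error[OF s0 sT] .
  have corr_s: "\<bar>correction s\<bar> \<le> \<beta>" unfolding \<beta>_def using correction_bound[of s s] s0 by auto
  have steered_s: "steered s = x_eta s - correction s" using sT s0 unfolding steered_def by auto
  have f0_err: "f0 (steered s) (delay_int steered s) - f0 (x_eta s) (delay_int x_eta s) \<ge> - C * (\<beta> + (a_max * T * \<beta> + D))"
  proof -
    have "\<bar>f0 (steered s) (delay_int steered s) - f0 (x_eta s) (delay_int x_eta s)\<bar>
          \<le> C * (\<bar>steered s - x_eta s\<bar> + \<bar>delay_int steered s - delay_int x_eta s\<bar>)"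
      by (rule f0_lip)
    also have "\<dots> \<le> C * (\<beta> + (a_max * T * \<beta> + D))"
      using delay_err corr_s steered_s C_nn by (intro mult_left_mono) (auto simp: abs_minus_commute)
    finally show ?thesis by linarith
  qed
  have "steered_control s = c_eta s + correction' s - r * correction s
          + (f0 (steered s) (delay_int steered s) - f0 (x_eta s) (delay_int x_eta s))"
    unfolding steered_control_def steered_drift_def drift_def using sT by (simp add: steered_s algebra_simps)
  moreover have "r * correction s \<le> r * \<beta>" using corr_s r_pos by (intro mult_left_mono) auto
  moreover have "r * \<beta> + C * (\<beta> + (a_max * T * \<beta> + D)) \<le> correction' s"
  proof -
    have "r * \<beta> + C * (\<beta> + (a_max * T * \<beta> + D)) = gamma * (1 - L_drift) + L_drift * gamma * exp ((L_drift + 1) * s)"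
      unfolding \<beta>_def gamma_def L_drift_def by (simp add: algebra_simps)
    moreover have "correction' s - (gamma * (1 - L_drift) + L_drift * gamma * exp ((L_drift + 1) * s))
        = gamma * (exp ((L_drift + 1) * s) - 1) + L_drift * gamma"
      unfolding correction'_def by (simp add: algebra_simps)
    moreover have "gamma * (exp ((L_drift + 1) * s) - 1) + L_drift * gamma \<ge> 0"
      using gamma_nn L_drift_pos s0 by (intro add_nonneg_nonneg mult_nonneg_nonneg) auto
    ultimately show ?thesis by linarith
  qed
  ultimately show ?thesis using f0_err c_eta_nn[OF s0] by linarith
qed

text \<open>After T the control is r x + f0(x, Y) + C x, nonnegative because x > 0, Y >= 0 (a >= 0) and
  f0(x, 0) >= f0(0,0) - C x >= - C x.\<close>

lemma steered_control_nonneg_after: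
  assumes s: "s > T"
  shows "steered_control s \<ge> 0"
proof -
  have xp: "steered s > 0" using steered_pos s T_pos by simp
  have "delay_int steered s \<ge> 0"
    unfolding delay_int_def set_lebesgue_integral_def
  proof (rule Bochner_Integration.integral_nonneg)
    fix \<xi> :: real
    show "0 \<le> indicator {-T..0} \<xi> *\<^sub>R (a \<xi> * steered (s + \<xi>))"
      using a_nn[of \<xi>] steered_pos[of "s + \<xi>"] s by (cases "\<xi> \<in> {-T..0}") auto
  qed
  then have "f0 (steered s) (delay_int steered s) \<ge> f0 (steered s) 0" using f0_mono by blast
  moreover have "f0 (steered s) 0 \<ge> - C * steered s"
    using f0_lip[of "steered s" 0 0 0] f0_00 xp by (simp add: abs_le_iff)
  ultimately have "steered_control s \<ge> r * steered s"
    unfolding steered_control_def steered_drift_def using s by simp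
  then show ?thesis using xp r_pos by (smt (verit) mult_pos_pos)
qed

lemma steered_control_nonneg: "s \<ge> 0 \<Longrightarrow> steered_control s \<ge> 0"
  using steered_control_nonneg_Icc steered_control_nonneg_after by force

lemma steered_lower_exp:
  assumes t: "t \<ge> 0"
  shows "steered t \<ge> m / 2 * exp (- C * t)"
proof (cases "t \<le> T")
  case True
  have "m / 2 * exp (- C * t) \<le> m / 2" using m_pos C_nn t by (simp add: mult_nonneg_nonneg)
  moreover have "steered t \<ge> m / 2" using True t by (intro steered_ge_half_m) auto
  ultimately show ?thesis by linarith
next
  case False
  have "m / 2 * exp (- C * t) \<le> m / 2 * exp (- C * (t - T))"
    using m_pos C_nn T_pos by (intro mult_left_mono) (auto simp: mult_left_mono)
  also have "\<dots> \<le> steered T * exp (- C * (t - T))"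
    using steered_ge_half_m[of T] T_pos by (intro mult_right_mono) auto
  finally show ?thesis using steered_tail[of t] False by simp
qed

end
section \<open>Finiteness of the payoff\<close>

text \<open>If the state is bounded below by mu e^{-Ct}, then U2 of the state has an integrable discounted
  minorant: a time shift of the function in the integrability hypothesis on U2.\<close>

lemma discounted_U2_minorant:
  fixes U2 :: "real \<Rightarrow> real"
  assumes rho: "\<rho> > 0" and C: "C \<ge> 0" and mu: "\<mu> > 0"
    and U2_mono: "\<And>p q. 0 < p \<Longrightarrow> p \<le> q \<Longrightarrow> U2 p \<le> U2 q"
    and U2_int: "set_integrable lborel {0..} (\<lambda>t. exp (-\<rho> * t) * U2 (exp (- C * t)))"
  obtains V where "\<And>t. t \<ge> 0 \<Longrightarrow> V t \<le> U2 (\<mu> * exp (- C * t))"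
    and "set_integrable lborel {0..} (\<lambda>t. exp (-\<rho> * t) * V t)"
proof (cases "C = 0")
  case True
  then show ?thesis using that[of "\<lambda>_. U2 \<mu>"] set_integrable_exp_decay[OF rho] by simp
next
  case False
  then have Cp: "C > 0" using C by simp
  define \<tau> where "\<tau> = \<bar>ln \<mu>\<bar> / C"
  have \<tau>0: "\<tau> \<ge> 0" unfolding \<tau>_def using Cp by simp
  have "- C * \<tau> \<le> ln \<mu>" unfolding \<tau>_def using Cp by simp
  then have e\<tau>: "exp (- C * \<tau>) \<le> \<mu>" using mu by (metis exp_le_cancel_iff exp_ln)
  have minorant: "U2 (exp (- C * (t + \<tau>))) \<le> U2 (\<mu> * exp (- C * t))" for t
  proof (rule U2_mono)
    have "exp (- C * (t + \<tau>)) = exp (- C * \<tau>) * exp (- C * t)" by (simp add: algebra_simps flip: exp_add)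
    also have "\<dots> \<le> \<mu> * exp (- C * t)" using e\<tau> by simp
    finally show "exp (- C * (t + \<tau>)) \<le> \<mu> * exp (- C * t)" .
  qed simp
  define f where "f s = indicator {0..} s * (exp (-\<rho> * s) * U2 (exp (- C * s)))" for s
  have "integrable lborel (\<lambda>t. f (\<tau> + 1 * t))"
    using U2_int unfolding set_integrable_def f_def by (intro lborel_integrable_real_affine) auto
  then have "integrable lborel (\<lambda>t. exp (\<rho> * \<tau>) * (indicator {0..} t * f (\<tau> + t)))"
    using integrable_mult_indicator[of "{0..}" lborel "\<lambda>t. f (\<tau> + t)"] by simp
  moreover have "(\<lambda>t. exp (\<rho> * \<tau>) * (indicator {0..} t * f (\<tau> + t))) =
      (\<lambda>t. indicator {0..} t *\<^sub>R (exp (-\<rho> * t) * U2 (exp (- C * (t + \<tau>)))))"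
  proof
    fix t
    have "exp (\<rho> * \<tau>) * exp (-\<rho> * (\<tau> + t)) = exp (-\<rho> * t)"
      by (simp add: algebra_simps flip: exp_add)
    then show "exp (\<rho> * \<tau>) * (indicator {0..} t * f (\<tau> + t)) =
        indicator {0..} t *\<^sub>R (exp (-\<rho> * t) * U2 (exp (- C * (t + \<tau>))))"
      unfolding f_def using \<tau>0 by (cases "t \<ge> 0") (simp_all add: algebra_simps)
  qed
  ultimately have "set_integrable lborel {0..} (\<lambda>t. exp (-\<rho> * t) * U2 (exp (- C * (t + \<tau>))))"
    unfolding set_integrable_def by simp
  then show ?thesis using that[of "\<lambda>t. U2 (exp (- C * (t + \<tau>)))"] minorant by blast
qed

text \<open>For a nonnegative control and a state bounded below by mu e^{-Ct}, the negative part of the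
  discounted utility has finite integral (U1 is bounded, U2 has the minorant above).\<close>

lemma negative_payoff_finite:
  fixes U1 U2 c x :: "real \<Rightarrow> real"
  assumes rho: "\<rho> > 0" and C: "C \<ge> 0" and mu: "\<mu> > 0"
    and U1_bound: "\<And>u. u \<ge> 0 \<Longrightarrow> \<bar>U1 u\<bar> \<le> B1"
    and U2_mono: "\<And>p q. 0 < p \<Longrightarrow> p \<le> q \<Longrightarrow> U2 p \<le> U2 q"
    and U2_int: "set_integrable lborel {0..} (\<lambda>t. exp (-\<rho> * t) * U2 (exp (- C * t)))"
    and c: "\<And>t. t \<ge> 0 \<Longrightarrow> c t \<ge> 0"
    and x: "\<And>t. t \<ge> 0 \<Longrightarrow> x t \<ge> \<mu> * exp (- C * t)"
  shows "(\<integral>\<^sup>+t\<in>{0..}. ennreal (- (exp (-\<rho> * t) * (U1 (c t) + U2 (x t)))) \<partial>lborel) < \<infinity>"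
proof -
  obtain V where V0: "\<And>t. t \<ge> 0 \<Longrightarrow> V t \<le> U2 (\<mu> * exp (- C * t))"
    and Vi: "set_integrable lborel {0..} (\<lambda>t. exp (-\<rho> * t) * V t)"
    using discounted_U2_minorant[OF rho C mu U2_mono U2_int] by blast
  have V: "V t \<le> U2 (x t)" if "t \<ge> 0" for t
    using V0[OF that] U2_mono[OF _ x[OF that]] mu by (smt (verit) exp_gt_zero mult_pos_pos)
  define H where "H t = indicator {0..} t * (exp (-\<rho> * t) * B1 + \<bar>exp (-\<rho> * t) * V t\<bar>)" for t
  have Hi: "integrable lborel H"
  proof -
    have "set_integrable lborel {0..} (\<lambda>t. exp (-\<rho> * t) * B1 + \<bar>exp (-\<rho> * t) * V t\<bar>)"
      using set_integrable_exp_decay[OF rho, of B1] set_integrable_abs[OF Vi] by (intro set_integral_add(1))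
    then show ?thesis unfolding H_def set_integrable_def by simp
  qed
  have "(\<integral>\<^sup>+t\<in>{0..}. ennreal (- (exp (-\<rho> * t) * (U1 (c t) + U2 (x t)))) \<partial>lborel) \<le> (\<integral>\<^sup>+t. ennreal (norm (H t)) \<partial>lborel)"
  proof (rule nn_integral_mono)
    fix t :: real
    show "ennreal (- (exp (-\<rho> * t) * (U1 (c t) + U2 (x t)))) * indicator {0..} t \<le> ennreal (norm (H t))"
    proof (cases "t \<ge> 0")
      case True
      have "- U1 (c t) - U2 (x t) \<le> B1 - V t" using U1_bound[OF c[OF True]] V[OF True] by linarith
      then have "exp (-\<rho> * t) * (- U1 (c t) - U2 (x t)) \<le> exp (-\<rho> * t) * (B1 - V t)"
        by (intro mult_left_mono) auto
      also have "\<dots> \<le> H t"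
        unfolding H_def using True abs_ge_minus_self[of "exp (-\<rho> * t) * V t"] by (simp add: algebra_simps)
      finally show ?thesis using True by (simp add: ennreal_leI algebra_simps)
    qed simp
  qed
  also have "\<dots> < \<infinity>" using Hi unfolding integrable_iff_bounded by blast
  finally show ?thesis .
qed

lemma Jfun_gt_minus_infinity:
  assumes "(\<integral>\<^sup>+t\<in>{0..}. ennreal (- (exp (-\<rho> * t) * (U1 (c t) + U2 (state T r a f0 \<zeta> c t)))) \<partial>lborel) < \<infinity>"
  shows "Jfun T r \<rho> a f0 U1 U2 \<zeta> c > -\<infinity>"
proof -
  define P where "P = (\<integral>\<^sup>+t\<in>{0..}. ennreal (exp (-\<rho> * t) * (U1 (c t) + U2 (state T r a f0 \<zeta> c t))) \<partial>lborel)"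
  define N where "N = (\<integral>\<^sup>+t\<in>{0..}. ennreal (- (exp (-\<rho> * t) * (U1 (c t) + U2 (state T r a f0 \<zeta> c t)))) \<partial>lborel)"
  have "Jfun T r \<rho> a f0 U1 U2 \<zeta> c = enn2ereal P - enn2ereal N"
    unfolding Jfun_def Let_def P_def N_def ..
  moreover have "N < \<infinity>" using assms unfolding N_def .
  ultimately show ?thesis
    by (cases "enn2ereal P"; cases "enn2ereal N") (auto simp: enn2ereal_nonneg)
qed

context delay_model
begin

lemma domV_witness:
  assumes "\<eta> \<in> domV T r \<rho> a f0 U1 U2"
  obtains c m where "loc_int c" "\<And>t. t \<ge> 0 \<Longrightarrow> c t \<ge> 0" "m > 0"
    "\<And>t. t \<in> {0..T} \<Longrightarrow> state T r a f0 \<eta> c t \<ge> m"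
proof -
  have "Vfun T r \<rho> a f0 U1 U2 \<eta> > -\<infinity>" using assms unfolding domV_def by auto
  then have "admissible T r a f0 \<eta> \<noteq> {}" unfolding Vfun_def by (auto simp: bot_ereal_def)
  then obtain c where "c \<in> admissible T r a f0 \<eta>" by blast
  then have c: "loc_int c" "\<And>t. t \<ge> 0 \<Longrightarrow> c t \<ge> 0" and pos: "\<forall>t\<ge>0. state T r a f0 \<eta> c t > 0"
    unfolding admissible_def Lloc_nonneg_def loc_int_def by auto
  have "inL2 T (snd \<eta>)" using assms unfolding domV_def inHplus_def by auto
  then have "is_path (snd \<eta>) (state T r a f0 \<eta> c)" by (rule state_is_path_fixpoint(1)[OF _ c(1)])
  then have cont: "continuous_on {0..T} (state T r a f0 \<eta> c)"
    unfolding is_path_def by (intro continuous_on_subset[OF conjunct2[OF conjunct2]]) auto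
  obtain t0 where t0: "t0 \<in> {0..T}" "\<And>t. t \<in> {0..T} \<Longrightarrow> state T r a f0 \<eta> c t0 \<le> state T r a f0 \<eta> c t"
    using continuous_attains_inf[OF compact_Icc _ cont] T_pos by auto
  then show ?thesis using that[OF c, of "state T r a f0 \<eta> c t0"] pos by auto
qed

definition steer_radius :: "real \<Rightarrow> real" where
  "steer_radius m = m / (2 * (r + (L_drift * r + C * K_hist) * exp ((L_drift + 1) * T)))"

lemma steer_radius_pos: "m > 0 \<Longrightarrow> steer_radius m > 0"
  unfolding steer_radius_def using r_pos L_drift_pos C_nn K_hist_pos
  by (intro divide_pos_pos mult_pos_pos add_pos_nonneg mult_nonneg_nonneg) auto

lemma steer_radius_small:
  assumes "m > 0" and "\<bar>p - q\<bar> \<le> r * steer_radius m"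
  shows "\<bar>p - q\<bar> + (L_drift * \<bar>p - q\<bar> + C * (K_hist * steer_radius m)) * exp ((L_drift + 1) * T) \<le> m / 2"
proof -
  define \<epsilon> where "\<epsilon> = steer_radius m"
  define den where "den = r + (L_drift * r + C * K_hist) * exp ((L_drift + 1) * T)"
  have den: "den > 0"
    unfolding den_def using r_pos L_drift_pos C_nn K_hist_pos by (intro add_pos_nonneg mult_nonneg_nonneg) auto
  have "\<bar>p - q\<bar> + (L_drift * \<bar>p - q\<bar> + C * (K_hist * \<epsilon>)) * exp ((L_drift + 1) * T)
      \<le> r * \<epsilon> + (L_drift * (r * \<epsilon>) + C * (K_hist * \<epsilon>)) * exp ((L_drift + 1) * T)"
    using assms(2) L_drift_pos K_hist_pos C_nn steer_radius_pos[OF assms(1)] unfolding \<epsilon>_def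
    by (intro add_mono mult_right_mono mult_left_mono) auto
  also have "\<dots> = \<epsilon> * den" unfolding den_def by (simp add: algebra_simps)
  also have "\<dots> = m / 2" using den unfolding \<epsilon>_def steer_radius_def den_def[symmetric] by simp
  finally show ?thesis unfolding \<epsilon>_def .
qed

lemma nearby_datum_steerable:
  assumes g_eta: "inL2 T (snd \<eta>)" and c: "loc_int c" "\<And>t. t \<ge> 0 \<Longrightarrow> c t \<ge> 0"
    and m: "m > 0" "\<And>t. t \<in> {0..T} \<Longrightarrow> state T r a f0 \<eta> c t \<ge> m"
    and g_zeta: "inL2 T (snd \<zeta>)" and close: "norm_m1 T r (Hminus \<zeta> \<eta>) < steer_radius m"
  obtains c' where "c' \<in> admissible T r a f0 \<zeta>" "\<And>t. t \<ge> 0 \<Longrightarrow> state T r a f0 \<zeta> c' t \<ge> m / 2 * exp (- C * t)"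
    "fst \<zeta> > 0"
proof -
  define \<epsilon> where "\<epsilon> = steer_radius m"
  have \<epsilon>: "\<epsilon> > 0" unfolding \<epsilon>_def using steer_radius_pos[OF m(1)] .
  have small: "\<bar>fst \<eta> - fst \<zeta>\<bar> + (L_drift * \<bar>fst \<eta> - fst \<zeta>\<bar> + C * (K_hist * \<epsilon>)) * exp ((L_drift + 1) * T) \<le> m / 2"
    unfolding \<epsilon>_def by (rule steer_radius_small[OF m(1) norm_m1_fst_bound[OF close]])
  interpret steering T r C a a' f0 "snd \<eta>" "snd \<zeta>" c "state T r a f0 \<eta> c" "fst \<eta>" "fst \<zeta>" m "K_hist * \<epsilon>"
    using g_eta g_zeta c m small state_is_path_fixpoint[OF g_eta c(1)]
      delay_hist_bound[OF g_eta g_zeta \<epsilon> _ close[folded \<epsilon>_def]]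
    by unfold_locales auto
  have state_zeta: "state T r a f0 \<zeta> steered_control = steered"
    using steered_path steered_fixpoint
    by (intro state_eqI[OF g_zeta steered_control_loc_int]) (simp add: is_state_iff_picard_fixpoint[OF g_zeta steered_control_loc_int])
  show ?thesis
  proof (rule that)
    show "steered_control \<in> admissible T r a f0 \<zeta>"
      using steered_control_loc_int steered_control_nonneg steered_pos
      unfolding admissible_def Lloc_nonneg_def loc_int_def by (auto simp: state_zeta)
    show "state T r a f0 \<zeta> steered_control t \<ge> m / 2 * exp (- C * t)" if "t \<ge> 0" for t
      using steered_lower_exp[OF that] unfolding state_zeta .
    show "fst \<zeta> > 0"
      using steered_pos[of 0] fun_cong[OF steered_fixpoint, of 0] picard_at_0 by simp
  qed
qed

lemma domV_contains_ball:
  fixes U1 U2 :: "real \<Rightarrow> real"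
  assumes rho: "\<rho> > 0" and U1_bound: "\<And>u. u \<ge> 0 \<Longrightarrow> \<bar>U1 u\<bar> \<le> B1"
    and U2_mono: "\<And>p q. 0 < p \<Longrightarrow> p \<le> q \<Longrightarrow> U2 p \<le> U2 q"
    and U2_int: "set_integrable lborel {0..} (\<lambda>t. exp (-\<rho> * t) * U2 (exp (- C * t)))"
    and \<eta>: "\<eta> \<in> domV T r \<rho> a f0 U1 U2"
  shows "\<exists>\<epsilon>>0. \<forall>\<zeta>. inH T \<zeta> \<and> norm_m1 T r (Hminus \<zeta> \<eta>) < \<epsilon> \<longrightarrow> \<zeta> \<in> domV T r \<rho> a f0 U1 U2"
proof -
  have g_eta: "inL2 T (snd \<eta>)" using \<eta> unfolding domV_def inHplus_def by auto
  obtain c m where c: "loc_int c" "\<And>t. t \<ge> 0 \<Longrightarrow> c t \<ge> 0"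
    and m: "m > 0" "\<And>t. t \<in> {0..T} \<Longrightarrow> state T r a f0 \<eta> c t \<ge> m"
    using domV_witness[OF \<eta>] by blast
  show ?thesis
  proof (intro exI[of _ "steer_radius m"] conjI allI impI steer_radius_pos[OF m(1)])
    fix \<zeta> assume \<zeta>: "inH T \<zeta> \<and> norm_m1 T r (Hminus \<zeta> \<eta>) < steer_radius m"
    then have g_zeta: "inL2 T (snd \<zeta>)" unfolding inH_def by auto
    obtain c' where adm: "c' \<in> admissible T r a f0 \<zeta>"
      and lower: "\<And>t. t \<ge> 0 \<Longrightarrow> state T r a f0 \<zeta> c' t \<ge> m / 2 * exp (- C * t)"
      and pos: "fst \<zeta> > 0"
      using nearby_datum_steerable[OF g_eta c m g_zeta] \<zeta> by blast
    have "Jfun T r \<rho> a f0 U1 U2 \<zeta> c' > -\<infinity>"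
      using adm m(1) unfolding admissible_def Lloc_nonneg_def
      by (intro Jfun_gt_minus_infinity negative_payoff_finite[OF rho C_nn _ U1_bound U2_mono U2_int _ lower]) auto
    also have "Jfun T r \<rho> a f0 U1 U2 \<zeta> c' \<le> Vfun T r \<rho> a f0 U1 U2 \<zeta>"
      unfolding Vfun_def by (rule SUP_upper[OF adm])
    finally show "\<zeta> \<in> domV T r \<rho> a f0 U1 U2"
      unfolding domV_def inHplus_def using pos g_zeta by auto
  qed
qed

end

lemma l1_lipschitz_of_extension:
  fixes f0 :: "real \<Rightarrow> real \<Rightarrow> real"
  assumes lip: "C-lipschitz_on ({0..} \<times> UNIV) (\<lambda>(x, y). f0 x y)"
    and ext: "\<forall>x<0. \<forall>y. f0 x y = f0 0 y"
  shows "\<bar>f0 x1 y1 - f0 x2 y2\<bar> \<le> C * (\<bar>x1 - x2\<bar> + \<bar>y1 - y2\<bar>)"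
proof -
  have C0: "C \<ge> 0" using lip unfolding lipschitz_on_def by blast
  have f0_max: "f0 x y = f0 (max x 0) y" for x y using ext by (cases "x < 0") auto
  have "dist (f0 (max x1 0) y1) (f0 (max x2 0) y2) \<le> C * dist (max x1 0, y1) (max x2 0, y2)"
    using lip unfolding lipschitz_on_def by auto
  also have "dist (max x1 0, y1) (max x2 0, y2) \<le> \<bar>max x1 0 - max x2 0\<bar> + \<bar>y1 - y2\<bar>"
    unfolding dist_Pair_Pair dist_real_def by (rule sqrt_sum_squares_le_sum_abs)
  also have "\<dots> \<le> \<bar>x1 - x2\<bar> + \<bar>y1 - y2\<bar>" by (simp add: max_def abs_if)
  finally have "dist (f0 (max x1 0) y1) (f0 (max x2 0) y2) \<le> C * (\<bar>x1 - x2\<bar> + \<bar>y1 - y2\<bar>)"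
    using C0 by (smt (verit, best) mult_left_mono)
  then show ?thesis using f0_max[of x1 y1] f0_max[of x2 y2] by (simp add: dist_real_def)
qed

text \<open>The standing assumptions provide the regularity collected in the locale delay_model
  (a' is the weak derivative of a; the Lipschitz bound and monotonicity of f0 extend to x < 0
  since f0(x, y) = f0(0, y) there; f0(0,0) >= 0 follows from f0(0,y) > 0 for y > 0).\<close>

lemma delay_model_of_assumptions:
  fixes T r C :: real and a :: "real \<Rightarrow> real" and f0 :: "real \<Rightarrow> real \<Rightarrow> real"
  assumes T_pos: "T > 0" and r_pos: "r > 0"
    and a_W12: "inW12 T a" and a_nonneg: "\<forall>s\<in>{-T..0}. a s \<ge> 0" and a_end: "a (-T) = 0"
    and f0_mono: "\<forall>x\<ge>0. \<forall>y1 y2. y1 \<le> y2 \<longrightarrow> f0 x y1 \<le> f0 x y2"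
    and f0_lip: "C-lipschitz_on ({0..} \<times> UNIV) (\<lambda>(x, y). f0 x y)"
    and f0_pos: "\<forall>y>0. f0 0 y > 0"
    and f0_ext: "\<forall>x<0. \<forall>y. f0 x y = f0 0 y"
  obtains a' where "delay_model T r C a a' f0"
proof -
  obtain a' where a': "inL2 T a'" "\<forall>s\<in>{-T..0}. a s = a (-T) + (\<integral>u\<in>{-T..s}. a' u \<partial>lborel)"
    using a_W12 unfolding inW12_def by blast
  have C0: "C \<ge> 0" using f0_lip unfolding lipschitz_on_def by blast
  have f0_max: "f0 x y = f0 (max x 0) y" for x y using f0_ext by (cases "x < 0") auto
  have l1_lip: "\<bar>f0 x1 y1 - f0 x2 y2\<bar> \<le> C * (\<bar>x1 - x2\<bar> + \<bar>y1 - y2\<bar>)" for x1 y1 x2 y2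
    by (rule l1_lipschitz_of_extension[OF f0_lip f0_ext])
  have mono: "f0 x y1 \<le> f0 x y2" if "y1 \<le> y2" for x y1 y2
    using f0_mono that f0_max[of x y1] f0_max[of x y2] by (metis max.cobounded2)
  have f00: "f0 0 0 \<ge> 0"
  proof (rule ccontr)
    assume "\<not> f0 0 0 \<ge> 0"
    then have neg: "f0 0 0 < 0" by simp
    define y where "y = - f0 0 0 / (C + 1)"
    have y0: "y > 0" unfolding y_def using neg C0 by (intro divide_pos_pos) auto
    have "f0 0 y \<le> f0 0 0 + C * y" using l1_lip[of 0 y 0 0] y0 by simp
    also have "\<dots> = f0 0 0 / (C + 1)" unfolding y_def using C0 by (simp add: field_simps)
    also have "\<dots> < 0" using C0 by (intro divide_neg_pos[OF neg]) linarith
    finally show False using f0_pos[rule_format, OF y0] by linarith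
  qed
  have "delay_model T r C a a' f0"
  proof
    show "a s = (\<integral>u\<in>{-T..s}. a' u \<partial>lborel)" if "s \<in> {-T..0}" for s
      using a'(2) a_end that by simp
    show "a s \<ge> 0" if "s \<in> {-T..0}" for s using a_nonneg that by blast
  qed (fact T_pos r_pos C0 a'(1) l1_lip mono f00)+
  then show ?thesis by (rule that)
qed

theorem proposition3p6:
  fixes T r \<rho> C_f0 :: real
    and a :: "real \<Rightarrow> real"
    and f0 :: "real \<Rightarrow> real \<Rightarrow> real"
    and U1 U2 :: "real \<Rightarrow> real"
  assumes T_pos: "T > 0" and r_pos: "r > 0" and rho_pos: "\<rho> > 0"
    and a_W12: "inW12 T a" and a_nonneg: "\<forall>s\<in>{-T..0}. a s \<ge> 0" and a_end: "a (-T) = 0"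
    and f0_concave: "concave_on ({0..} \<times> UNIV) (\<lambda>(x, y). f0 x y)"
    and f0_mono: "\<forall>x\<ge>0. \<forall>y1 y2. y1 \<le> y2 \<longrightarrow> f0 x y1 \<le> f0 x y2"
    and f0_lip: "C_f0-lipschitz_on ({0..} \<times> UNIV) (\<lambda>(x, y). f0 x y)"
    and f0_pos: "\<forall>y>0. f0 0 y > 0"
    and f0_ext: "\<forall>x<0. \<forall>y. f0 x y = f0 0 y"
    and U1_cont: "continuous_on {0..} U1"
    and U1_C2: "\<exists>U1' U1''. (\<forall>x>0. (U1 has_real_derivative U1' x) (at x) \<and>
                                 (U1' has_real_derivative U1'' x) (at x) \<and>
                                 U1' x > 0 \<and> U1'' x < 0) \<and>
                           continuous_on {0<..} U1'' \<and>
                           filterlim U1' at_top (at_right 0)"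
    and U1_bdd: "bounded (U1 ` {0..})"
    and U2_cont: "continuous_on {0<..} U2"
    and U2_incr: "strict_mono_on {0<..} U2"
    and U2_concave: "concave_on {0<..} U2"
    and U2_bdd: "bdd_above (U2 ` {0<..})"
    and U2_int: "set_integrable lborel {0..} (\<lambda>t. exp (-\<rho> * t) * U2 (exp (- C_f0 * t)))"
  shows "\<forall>\<eta>\<in>domV T r \<rho> a f0 U1 U2. \<exists>\<epsilon>>0. \<forall>\<zeta>. inH T \<zeta> \<and> norm_m1 T r (Hminus \<zeta> \<eta>) < \<epsilon>
            \<longrightarrow> \<zeta> \<in> domV T r \<rho> a f0 U1 U2"
proof -
  obtain a' where "delay_model T r C_f0 a a' f0"
    using delay_model_of_assumptions[OF T_pos r_pos a_W12 a_nonneg a_end f0_mono f0_lip f0_pos f0_ext] .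
  then interpret delay_model T r C_f0 a a' f0 .
  obtain B1 where B1: "\<And>u. u \<ge> 0 \<Longrightarrow> \<bar>U1 u\<bar> \<le> B1"
    using U1_bdd unfolding bounded_iff by auto
  have U2_mono: "\<And>p q. 0 < p \<Longrightarrow> p \<le> q \<Longrightarrow> U2 p \<le> U2 q"
    by (rule strict_mono_on_leD[OF U2_incr]) auto
  show ?thesis by (intro ballI domV_contains_ball[OF rho_pos B1 U2_mono U2_int])
qed

end
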